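(* Let $r,h\ge 2$ and $g,m$ be positive integers with $g+h<gr$, put $n=rg$, and let $q$ be a prime power with $q^m\ge \frac{mn}{r}$. If (i) $m\ge r$, or (ii) $m<r$ and there exists a $q$-ary $[r,r-m,\ge h+2]$ linear code, then there exists an MR $(n,r,h,1)$-LRC over a field of size $\ell=q^{\min\{hm,\frac{nm}{r}\}}$.
   Context: Definition: let $\ell$ be a prime power, $a,g,r,h$ positive integers with $ga+h<gr$, $n=gr$, $k=n-ga-h$. An MR (maximally recoverable) $(n,r,h,a)_\ell$-LRC is an $[n,k]$ linear code over $\mathbb{F}_\ell$ with a parity-check matrix $H\in\mathbb{F}_\ell^{(n-k)\times n}$ of the block form whose first $ga$ rows are block diagonal with diagonal blocks $A_1,\dots,A_g$ (each of size $a\times r$, the coordinates split into $g$ consecutive groups of size $r$) and whose last $h$ rows are $(D_1|\cdots|D_g)$ with each $D_i$ of size $h\times r$, such that (i) each $A_i$ generates an $[r,a,r-a+1]_\ell$ MDS code, and (ii) every set of $ag+h$ columns of $H$ consisting of any $a$ columns from each group together with any $h$ further columns is linearly independent over $\mathbb{F}_\ell$. "An MR $(n,r,h,a)$-LRC over a field of size $\ell$" means an MR $(n,r,h,a)_\ell$-LRC. *)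

theory Defs
  imports Complex_Main "HOL-Computational_Algebra.Primes"
begin

text \<open>Matrices are functions nat => nat => 'a (row, column), with explicit dimensions.
  Vectors of length len are functions nat => 'a, only indices < len being relevant.\<close>

definition hamming_weight :: "(nat \<Rightarrow> 'a::zero) \<Rightarrow> nat \<Rightarrow> nat" where
  "hamming_weight x len = card {j. j < len \<and> x j \<noteq> 0}"

definition codeword :: "(nat \<Rightarrow> nat \<Rightarrow> 'a::field) \<Rightarrow> nat \<Rightarrow> (nat \<Rightarrow> 'a) \<Rightarrow> nat \<Rightarrow> 'a" where
  "codeword G k u = (\<lambda>j. \<Sum>i<k. u i * G i j)"

definition rows_lin_indep :: "(nat \<Rightarrow> nat \<Rightarrow> 'a::field) \<Rightarrow> nat \<Rightarrow> nat \<Rightarrow> bool" where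
  "rows_lin_indep G k len \<longleftrightarrow>
     (\<forall>u. (\<forall>j<len. codeword G k u j = 0) \<longrightarrow> (\<forall>i<k. u i = 0))"

definition cols_lin_indep :: "(nat \<Rightarrow> nat \<Rightarrow> 'a::field) \<Rightarrow> nat \<Rightarrow> nat set \<Rightarrow> bool" where
  "cols_lin_indep H nrows S \<longleftrightarrow>
     (\<forall>c. (\<forall>i<nrows. (\<Sum>j\<in>S. c j * H i j) = 0) \<longrightarrow> (\<forall>j\<in>S. c j = 0))"

definition lin_code_ge :: "(nat \<Rightarrow> nat \<Rightarrow> 'a::field) \<Rightarrow> nat \<Rightarrow> nat \<Rightarrow> nat \<Rightarrow> bool" where
  "lin_code_ge G len k d \<longleftrightarrow> rows_lin_indep G k len \<and>
     (\<forall>u. (\<exists>j<len. codeword G k u j \<noteq> 0) \<longrightarrow> d \<le> hamming_weight (codeword G k u) len)"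

definition lin_code :: "(nat \<Rightarrow> nat \<Rightarrow> 'a::field) \<Rightarrow> nat \<Rightarrow> nat \<Rightarrow> nat \<Rightarrow> bool" where
  "lin_code G len k d \<longleftrightarrow> lin_code_ge G len k d \<and>
     (\<exists>u. (\<exists>j<len. codeword G k u j \<noteq> 0) \<and> hamming_weight (codeword G k u) len = d)"

text \<open>Block parity-check matrix: first g*a rows block diagonal with blocks A 0, ..., A (g-1)
  (each a x r), last h rows given by D (h x n, n = g*r).\<close>
definition block_pcm :: "nat \<Rightarrow> nat \<Rightarrow> nat \<Rightarrow> (nat \<Rightarrow> nat \<Rightarrow> nat \<Rightarrow> 'a::zero) \<Rightarrow> (nat \<Rightarrow> nat \<Rightarrow> 'a) \<Rightarrow> nat \<Rightarrow> nat \<Rightarrow> 'a" where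
  "block_pcm g r a A D = (\<lambda>row j.
     if row < g * a then
       (if (row div a) * r \<le> j \<and> j < (row div a + 1) * r
        then A (row div a) (row mod a) (j - (row div a) * r) else 0)
     else D (row - g * a) j)"

definition MR_LRC :: "nat \<Rightarrow> nat \<Rightarrow> nat \<Rightarrow> nat \<Rightarrow> (nat \<Rightarrow> nat \<Rightarrow> nat \<Rightarrow> 'a::field) \<Rightarrow> (nat \<Rightarrow> nat \<Rightarrow> 'a) \<Rightarrow> bool" where
  "MR_LRC g r h a A D \<longleftrightarrow>
     0 < a \<and> 0 < g \<and> 0 < r \<and> 0 < h \<and> g * a + h < g * r \<and>
     (\<forall>i<g. lin_code (A i) r a (r - a + 1)) \<and>
     (\<forall>S. S \<subseteq> {0..<g * r} \<and> card S = g * a + h \<and>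
          (\<forall>i<g. a \<le> card (S \<inter> {i * r..<(i + 1) * r})) \<longrightarrow>
          cols_lin_indep (block_pcm g r a A D) (g * a + h) S)"

end

(*
  Let K = F_q, F = F_(q^m) and L = F_l with [L : F] = s = min h g, all realised inside L as
  fixed fields of Frobenius powers. The column of position l in group i gets the global
  entries beta^(q^t), t < h, where beta = y_l * v_i: here y_l is the l-th column of a parity-check
  matrix of the given [r, r - m, >= h + 2] code (the identity if m >= r) read in F through a
  K-basis of F, and v_i = sum_u a_i^u omega_u with distinct a_i in F and an F-basis omega of L.
  Using the all-one local rows to eliminate one representative per group, an admissible erasure
  pattern becomes a square Moore system in the h differences beta_j - beta_rep(j), which is
  nonsingular as soon as these differences are K-linearly independent. That independence
  splits along the v_i (a Vandermonde system over F) and then along the y_l (any h + 1 of them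
  are K-independent by the distance of the code). The q-ary code is transported into L by an
  embedding of F_q onto the fixed field of x -> x^q, obtained by sending a generator of the
  multiplicative group to a root of its minimal integer polynomial.
*)
theory Submission
  imports
    Defs
    "HOL-Algebra.Multiplicative_Group"
    "HOL-Number_Theory.Residues"
    "HOL-Library.Function_Algebras"
    "HOL-Computational_Algebra.Polynomial"
begin

section \<open>Finite fields\<close>

definition type_ring :: "'a :: field ring" where
  "type_ring = \<lparr>carrier = UNIV, monoid.mult = (*), one = 1, ring.zero = 0, add = (+)\<rparr>"

lemma field_type_ring: "field (type_ring :: 'a :: field ring)"
proof -
  have "\<exists>y. x + y = 0" "x \<noteq> 0 \<Longrightarrow> \<exists>y. x * y = 1" for x :: 'a
    by (metis add.right_inverse, metis right_inverse)
  then show ?thesis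
    unfolding type_ring_def by unfold_locales (auto simp: algebra_simps Units_def)
qed

lemma nat_pow_type_ring: "x [^]\<^bsub>type_ring\<^esub> n = (x :: 'a :: field) ^ n"
  by (induction n) (simp_all add: type_ring_def)

lemma finite_field_mult_group_cyclic:
  "\<exists>\<alpha> :: 'a :: {finite,field}. \<forall>x. x \<noteq> 0 \<longrightarrow> (\<exists>i. x = \<alpha> ^ i)"
proof -
  let ?R = "type_ring :: 'a ring"
  interpret field ?R by (rule field_type_ring)
  obtain \<alpha> where \<alpha>: "carrier (mult_of ?R) = {\<alpha> [^]\<^bsub>?R\<^esub> i | i :: nat. i \<in> UNIV}"
    using finite_field_mult_group_has_gen by (auto simp: type_ring_def)
  have "\<exists>i. x = \<alpha> ^ i" if "x \<noteq> 0" for x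
  proof -
    have "x \<in> carrier (mult_of ?R)" using that by (simp add: type_ring_def)
    then show ?thesis unfolding \<alpha> by (auto simp: nat_pow_type_ring)
  qed
  then show ?thesis by blast
qed

lemma finite_field_power_card: "(x :: 'a :: {finite,field}) ^ card (UNIV :: 'a set) = x"
proof (cases "x = 0")
  case False
  let ?R = "type_ring :: 'a ring"
  interpret field ?R by (rule field_type_ring)
  interpret G: group "mult_of ?R" by (rule field_mult_group)
  have "x [^]\<^bsub>mult_of ?R\<^esub> Coset.order (mult_of ?R) = 1"
    using G.pow_order_eq_1[of x] False by (simp add: type_ring_def)
  then have "x ^ (card (UNIV :: 'a set) - 1) = 1"
    by (simp add: order_mult_of Coset.order_def nat_pow_mult_of nat_pow_type_ring)
      (simp add: type_ring_def)
  then have "x * x ^ (card (UNIV :: 'a set) - 1) = x" by simp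
  then show ?thesis by (simp add: finite_UNIV_card_ge_0 flip: power_Suc)
qed (simp add: finite_UNIV_card_ge_0)

lemma finite_field_inverse_power:
  assumes "(x :: 'a :: {finite,field}) \<noteq> 0"
  shows "x ^ (card (UNIV :: 'a set) - 2) * x = 1"
proof -
  have "card {0 :: 'a, 1} \<le> card (UNIV :: 'a set)" by (rule card_mono) auto
  then have "card (UNIV :: 'a set) = Suc (Suc (card (UNIV :: 'a set) - 2))" by simp
  then have "x * (x ^ (card (UNIV :: 'a set) - 2) * x) = x * 1"
    using finite_field_power_card[of x] by (metis mult.commute mult_1 power_Suc)
  then show ?thesis using assms by simp
qed

lemma CHAR_finite_field:
  assumes "prime p" and "card (UNIV :: 'a :: {finite,field} set) = p ^ k"
  shows "CHAR('a) = p"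
proof -
  have "prime CHAR('a)" by (simp add: finite_imp_CHAR_pos prime_CHAR_semidom)
  moreover have "CHAR('a) dvd p ^ k" using CHAR_dvd_CARD[where 'a='a] assms(2) by simp
  ultimately show ?thesis using assms(1) prime_dvd_power primes_dvd_imp_eq by blast
qed

lemma additive_power_CHAR:
  assumes "Q = CHAR('a :: {finite,field}) ^ e"
  shows "additive (\<lambda>x :: 'a. x ^ Q)"
  by standard (rule freshmans_dream'[OF _ assms],
      simp add: finite_imp_CHAR_pos prime_CHAR_semidom)

lemma additive_power_power:
  assumes "additive (\<lambda>x :: 'a :: comm_ring_1. x ^ Q)"
  shows "additive (\<lambda>x :: 'a. x ^ (Q ^ t))"
proof (induction t)
  case 0
  show ?case by standard simp
next
  case (Suc t)
  show ?case
  proof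
    fix x y :: 'a
    have "(x + y) ^ (Q ^ Suc t) = ((x + y) ^ Q) ^ (Q ^ t)" by (simp add: power_mult)
    also have "\<dots> = (x ^ Q) ^ (Q ^ t) + (y ^ Q) ^ (Q ^ t)"
      using additive.add[OF assms] additive.add[OF Suc.IH] by simp
    finally show "(x + y) ^ (Q ^ Suc t) = x ^ (Q ^ Suc t) + y ^ (Q ^ Suc t)"
      by (simp add: power_mult)
  qed
qed

section \<open>Subfields and fixed fields of Frobenius powers\<close>

definition is_subfield :: "'a :: field set \<Rightarrow> bool" where
  "is_subfield E \<longleftrightarrow> 0 \<in> E \<and> 1 \<in> E \<and> (\<forall>x\<in>E. \<forall>y\<in>E. x + y \<in> E \<and> x * y \<in> E) \<and>
     (\<forall>x\<in>E. - x \<in> E \<and> inverse x \<in> E)"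

lemma
  assumes "is_subfield E"
  shows subfield_0: "0 \<in> E" and subfield_1: "1 \<in> E"
    and subfield_add: "x \<in> E \<Longrightarrow> y \<in> E \<Longrightarrow> x + y \<in> E"
    and subfield_mult: "x \<in> E \<Longrightarrow> y \<in> E \<Longrightarrow> x * y \<in> E"
    and subfield_uminus: "x \<in> E \<Longrightarrow> - x \<in> E"
    and subfield_inverse: "x \<in> E \<Longrightarrow> inverse x \<in> E"
  using assms unfolding is_subfield_def by auto

lemma
  assumes "is_subfield E"
  shows subfield_diff: "x \<in> E \<Longrightarrow> y \<in> E \<Longrightarrow> x - y \<in> E"
    and subfield_power: "x \<in> E \<Longrightarrow> x ^ n \<in> E"
    and subfield_sum: "(\<And>i. i \<in> I \<Longrightarrow> f i \<in> E) \<Longrightarrow> sum f I \<in> E"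
proof -
  show "x \<in> E \<Longrightarrow> y \<in> E \<Longrightarrow> x - y \<in> E"
    by (metis diff_conv_add_uminus subfield_add[OF assms] subfield_uminus[OF assms])
  show "x \<in> E \<Longrightarrow> x ^ n \<in> E"
    by (induction n) (auto intro: subfield_1[OF assms] subfield_mult[OF assms])
  show "(\<And>i. i \<in> I \<Longrightarrow> f i \<in> E) \<Longrightarrow> sum f I \<in> E"
    by (induction I rule: infinite_finite_induct)
      (auto intro: subfield_0[OF assms] subfield_add[OF assms])
qed

lemma is_subfield_UNIV: "is_subfield UNIV"
  by (simp add: is_subfield_def)

definition fixed_field :: "nat \<Rightarrow> 'a :: field set" where
  "fixed_field Q = {x. x ^ Q = x}"

lemma is_subfield_fixed_field:
  assumes "additive (\<lambda>x :: 'a :: field. x ^ Q)" and "Q > 0"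
  shows "is_subfield (fixed_field Q :: 'a set)"
proof -
  interpret frob: additive "\<lambda>x :: 'a. x ^ Q" by fact
  show ?thesis
    unfolding is_subfield_def
  proof (intro conjI ballI)
    fix x y :: 'a assume x: "x \<in> fixed_field Q" and y: "y \<in> fixed_field Q"
    show "x + y \<in> fixed_field Q" "- x \<in> fixed_field Q"
      using x y frob.add[of x y] frob.minus[of x] by (simp_all add: fixed_field_def)
    show "x * y \<in> fixed_field Q" "inverse x \<in> fixed_field Q"
      using x y by (simp_all add: fixed_field_def power_mult_distrib power_inverse)
  qed (use \<open>Q > 0\<close> in \<open>simp_all add: fixed_field_def\<close>)
qed

lemma fixed_field_subset_power: "fixed_field q \<subseteq> fixed_field (q ^ m)"
proof
  fix x :: 'a assume "x \<in> fixed_field q"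
  then have x: "x ^ q = x" by (simp add: fixed_field_def)
  have "x ^ (q ^ j) = x" for j
  proof (induction j)
    case (Suc j)
    have "x ^ (q ^ Suc j) = (x ^ q) ^ (q ^ j)" by (simp add: power_mult)
    then show ?case using x Suc by simp
  qed simp
  then show "x \<in> fixed_field (q ^ m)" by (simp add: fixed_field_def)
qed

lemma card_roots_factor:
  fixes f g :: "'a :: idom poly"
  assumes "f * g \<noteq> 0" and "degree (f * g) \<le> card {x. poly (f * g) x = 0}"
  shows "card {x. poly f x = 0} = degree f"
proof -
  have "f \<noteq> 0" "g \<noteq> 0" using assms(1) by auto
  have "{x. poly (f * g) x = 0} = {x. poly f x = 0} \<union> {x. poly g x = 0}" by auto
  then have "card {x. poly (f * g) x = 0} \<le> card {x. poly f x = 0} + card {x. poly g x = 0}"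
    by (simp add: card_Un_le)
  moreover have "card {x. poly f x = 0} \<le> degree f" "card {x. poly g x = 0} \<le> degree g"
    using card_poly_roots_bound \<open>f \<noteq> 0\<close> \<open>g \<noteq> 0\<close> by auto
  moreover have "degree (f * g) = degree f + degree g"
    using degree_mult_eq \<open>f \<noteq> 0\<close> \<open>g \<noteq> 0\<close> by blast
  ultimately show ?thesis using assms(2) by linarith
qed

lemma minus_one_dvd_power_minus_one: "(Q :: nat) - 1 dvd Q ^ s - 1"
proof (cases "Q = 0")
  case False
  then have "int (Q ^ s - 1) = (int Q - 1) * (\<Sum>i<s. int Q ^ i)"
    by (simp add: of_nat_diff power_diff_1_eq Suc_le_eq)
  then have "int (Q - 1) dvd int (Q ^ s - 1)" using False by (simp add: of_nat_diff)
  then show ?thesis by (simp only: of_nat_dvd_iff)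
qed (simp add: power_0_left)

lemma card_fixed_field:
  assumes "card (UNIV :: 'a :: {finite,field} set) = Q ^ s" and "s > 0" and "Q \<ge> 2"
  shows "card (fixed_field Q :: 'a set) = Q"
proof -
  define X :: "'a poly" where "X = [:0, 1:]"
  have deg: "degree (X ^ n - 1) = n" if "n > 0" for n
    using degree_add_eq_left[of "- 1" "X ^ n"] that by (simp add: X_def degree_linear_power)
  define N where "N = Q ^ s - 1"
  obtain c where c: "N = (Q - 1) * c"
    using minus_one_dvd_power_minus_one unfolding N_def by blast
  define f where "f = X ^ (Q - 1) - 1"
  define g where "g = (\<Sum>i<c. (X ^ (Q - 1)) ^ i)"
  have factor: "X ^ N - 1 = f * g"
    unfolding f_def g_def c power_mult by (rule power_diff_1_eq)
  have N: "N > 0" "Q ^ s = Suc N"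
    using assms(2,3) one_less_power[of Q s] by (auto simp: N_def)
  have "{x. poly (X ^ N - 1) x = 0} = UNIV - {0}"
  proof -
    have "x ^ N = 1" if "x \<noteq> 0" for x :: 'a
      using finite_field_power_card[of x] that by (simp add: assms(1) N(2))
    then show ?thesis using N(1) by (auto simp: X_def power_0_left)
  qed
  then have "card {x. poly (X ^ N - 1) x = 0} = degree (X ^ N - 1)"
    using deg[OF N(1)] assms(1) by (simp add: card_Diff_singleton N_def)
  moreover have "X ^ N - 1 \<noteq> 0" using deg[OF N(1)] N(1) by auto
  ultimately have "card {x. poly f x = 0} = degree f"
    using card_roots_factor[of f g] unfolding factor by simp
  then have roots_f: "card {x. poly f x = 0} = Q - 1"
    using deg[of "Q - 1"] assms(3) by (simp add: f_def)
  have "fixed_field Q = insert 0 {x :: 'a. poly f x = 0}"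
  proof -
    have "x ^ Q = x \<longleftrightarrow> x = 0 \<or> x ^ (Q - 1) = 1" for x :: 'a
      using assms(3) power_eq_if[of x Q] by (cases "x = 0") auto
    then show ?thesis by (auto simp: fixed_field_def f_def X_def)
  qed
  moreover have "0 \<notin> {x :: 'a. poly f x = 0}" using assms(3) by (simp add: f_def X_def power_0_left)
  ultimately show ?thesis using roots_f assms(3)
    by (simp add: card_insert_disjoint poly_roots_finite)
qed

section \<open>Linear independence over a subfield\<close>

definition lin_indep_over :: "'a :: field set \<Rightarrow> 'b set \<Rightarrow> ('b \<Rightarrow> 'a) \<Rightarrow> bool" where
  "lin_indep_over E J v \<longleftrightarrow>
     (\<forall>k. (\<forall>j\<in>J. k j \<in> E) \<longrightarrow> (\<Sum>j\<in>J. k j * v j) = 0 \<longrightarrow> (\<forall>j\<in>J. k j = 0))"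

lemma lin_indep_overD:
  assumes "lin_indep_over E J v" and "\<And>j. j \<in> J \<Longrightarrow> k j \<in> E" and "(\<Sum>j\<in>J. k j * v j) = 0"
    and "j \<in> J"
  shows "k j = 0"
  using assms unfolding lin_indep_over_def by blast

lemma lin_indep_over_subset:
  assumes "lin_indep_over E J v" and "0 \<in> E" and "J' \<subseteq> J" and "finite J"
  shows "lin_indep_over E J' v"
  unfolding lin_indep_over_def
proof (intro allI impI ballI)
  fix k j assume k: "\<forall>j\<in>J'. k j \<in> E" and sum: "(\<Sum>j\<in>J'. k j * v j) = 0" and "j \<in> J'"
  define k' where "k' j = (if j \<in> J' then k j else 0)" for j
  have "(\<Sum>j\<in>J. k' j * v j) = (\<Sum>j\<in>J'. k j * v j)"
    by (rule sum.mono_neutral_cong_right[OF assms(4,3)]) (simp_all add: k'_def)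
  moreover have "k' i \<in> E" if "i \<in> J" for i
    using k assms(2) by (simp add: k'_def)
  ultimately have "k' j = 0"
    using sum \<open>j \<in> J'\<close> assms(3) lin_indep_overD[OF assms(1), of k' j] by auto
  then show "k j = 0" using \<open>j \<in> J'\<close> by (simp add: k'_def)
qed

lemma lin_indep_over_cong:
  assumes "lin_indep_over E J v" and "\<And>j. j \<in> J \<Longrightarrow> v j = w j"
  shows "lin_indep_over E J w"
  using assms unfolding lin_indep_over_def by (metis (no_types, lifting) sum.cong)

locale subfield_vector_space = vector_space scale
  for scale :: "'a :: field \<Rightarrow> 'b :: ab_group_add \<Rightarrow> 'b" (infixr "*s" 75) +
  fixes E :: "'a set" and V C :: "'b set"
  assumes subfield_E: "is_subfield E" and finite_E: "finite E"
    and finite_V: "finite V"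
    and V_add: "x \<in> V \<Longrightarrow> y \<in> V \<Longrightarrow> x + y \<in> V"
    and V_scale: "a \<in> E \<Longrightarrow> x \<in> V \<Longrightarrow> a *s x \<in> V"
    and subspace_C: "subspace C" and C_subset_V: "C \<subseteq> V"
begin

definition span_mod :: "nat \<Rightarrow> (nat \<Rightarrow> 'b) \<Rightarrow> 'b set" where
  "span_mod d w = (\<lambda>(c, k). c + (\<Sum>t<d. k t *s w t)) ` (C \<times> (\<Pi>\<^sub>E t\<in>{..<d}. E))"

definition indep_mod :: "nat \<Rightarrow> (nat \<Rightarrow> 'b) \<Rightarrow> bool" where
  "indep_mod d w \<longleftrightarrow> (\<forall>k. (\<forall>t<d. k t \<in> E) \<longrightarrow> (\<Sum>t<d. k t *s w t) \<in> C \<longrightarrow> (\<forall>t<d. k t = 0))"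

lemma indep_modD:
  assumes "indep_mod d w" and "\<And>t. t < d \<Longrightarrow> k t \<in> E" and "(\<Sum>t<d. k t *s w t) \<in> C"
    and "t < d"
  shows "k t = 0"
  using assms unfolding indep_mod_def by blast

lemma card_span_mod:
  assumes "indep_mod d w"
  shows "card (span_mod d w) = card C * card E ^ d"
proof -
  have "inj_on (\<lambda>(c, k). c + (\<Sum>t<d. k t *s w t)) (C \<times> (\<Pi>\<^sub>E t\<in>{..<d}. E))"
  proof (rule inj_onI, clarify)
    fix c k c' k'
    assume c: "c \<in> C" "c' \<in> C" and k: "k \<in> (\<Pi>\<^sub>E t\<in>{..<d}. E)" "k' \<in> (\<Pi>\<^sub>E t\<in>{..<d}. E)"
      and eq: "c + (\<Sum>t<d. k t *s w t) = c' + (\<Sum>t<d. k' t *s w t)"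
    have "(\<Sum>t<d. (k t - k' t) *s w t) = (\<Sum>t<d. k t *s w t) - (\<Sum>t<d. k' t *s w t)"
      by (simp only: scale_left_diff_distrib sum_subtractf)
    also have "\<dots> = (c + (\<Sum>t<d. k t *s w t)) - (c + (\<Sum>t<d. k' t *s w t))"
      by (simp only: add_diff_cancel_left)
    also have "\<dots> = c' - c"
      unfolding eq by (simp only: add_diff_cancel_right)
    finally have "(\<Sum>t<d. (k t - k' t) *s w t) = c' - c" .
    then have "(\<Sum>t<d. (k t - k' t) *s w t) \<in> C"
      using c subspace_C by (simp add: subspace_diff)
    moreover have "\<forall>t<d. k t - k' t \<in> E"
      using k by (simp add: PiE_iff subfield_diff[OF subfield_E])
    ultimately have "\<forall>t<d. k t - k' t = 0"
      using indep_modD[OF assms, of "\<lambda>t. k t - k' t"] by blast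
    then have "k = k'" using k by (intro PiE_ext) auto
    then show "c = c' \<and> k = k'" using eq by simp
  qed
  moreover have "finite (\<Pi>\<^sub>E t\<in>{..<d}. E)" using finite_E by (intro finite_PiE) auto
  ultimately show ?thesis
    unfolding span_mod_def by (simp add: card_image card_cartesian_product card_PiE)
qed

lemma span_mod_subset:
  assumes "\<forall>t<d. w t \<in> V"
  shows "span_mod d w \<subseteq> V"
proof -
  have "(\<Sum>t<j. k t *s w t) \<in> V" if "\<forall>t<d. k t \<in> E" "j \<le> d" for k j
    using that
  proof (induction j)
    case 0 then show ?case using C_subset_V subspace_C by (auto simp: subspace_0)
  next
    case (Suc j) then show ?case using assms by (simp add: V_add V_scale)
  qed
  then show ?thesis
    unfolding span_mod_def using C_subset_V by (auto intro!: V_add simp: PiE_iff)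
qed

lemma indep_mod_extend:
  assumes indep: "indep_mod d w" and x: "x \<notin> span_mod d w"
  shows "indep_mod (Suc d) (w(d := x))"
  unfolding indep_mod_def
proof (rule allI, intro impI)
  fix k assume kE: "\<forall>t<Suc d. k t \<in> E" and kC: "(\<Sum>t<Suc d. k t *s (w(d := x)) t) \<in> C"
  have split: "(\<Sum>t<Suc d. k t *s (w(d := x)) t) = (\<Sum>t<d. k t *s w t) + k d *s x"
    by simp
  have kd: "k d = 0"
  proof (rule ccontr)
    assume "k d \<noteq> 0"
    define b where "b = inverse (k d)"
    define k' where "k' = restrict (\<lambda>t. - (b * k t)) {..<d}"
    define c where "c = b *s (\<Sum>t<Suc d. k t *s (w(d := x)) t)"
    have "b \<in> E" using kE subfield_E by (simp add: b_def subfield_inverse)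
    then have "k' \<in> (\<Pi>\<^sub>E t\<in>{..<d}. E)"
      using kE by (auto simp: k'_def intro!: subfield_uminus[OF subfield_E] subfield_mult[OF subfield_E])
    moreover have "c \<in> C" using kC subspace_C by (simp add: c_def subspace_scale)
    moreover have "x = c + (\<Sum>t<d. k' t *s w t)"
      using \<open>k d \<noteq> 0\<close> unfolding c_def split
      by (simp add: k'_def b_def scale_right_distrib scale_sum_right sum_negf)
    ultimately have "x \<in> span_mod d w" unfolding span_mod_def by force
    then show False using x by contradiction
  qed
  then have C: "(\<Sum>t<d. k t *s w t) \<in> C" using kC split by simp
  have "k t = 0" if "t < d" for t
    by (rule indep_modD[OF indep _ C that]) (use kE in simp)
  then show "\<forall>t<Suc d. k t = 0" using kd by (auto simp: less_Suc_eq)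
qed

lemma exists_indep_mod:
  assumes card_V: "card V = card C * card E ^ d" and "j \<le> d"
  shows "\<exists>w. (\<forall>t<j. w t \<in> V) \<and> indep_mod j w"
  using \<open>j \<le> d\<close>
proof (induction j)
  case 0 then show ?case by (auto simp: indep_mod_def)
next
  case (Suc j)
  then obtain w where w: "\<forall>t<j. w t \<in> V" "indep_mod j w" by auto
  have "card (span_mod j w) < card V"
  proof -
    have "card {0 :: 'a, 1} \<le> card E"
      using subfield_E by (intro card_mono[OF finite_E]) (simp add: subfield_0 subfield_1)
    then have "card E ^ j < card E ^ d"
      using Suc.prems by (intro power_strict_increasing) auto
    moreover have "card C > 0"
      using C_subset_V finite_V subspace_C subspace_0 card_gt_0_iff finite_subset by blast
    ultimately show ?thesis using card_span_mod[OF w(2)] card_V by simp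
  qed
  then have "span_mod j w \<subset> V" using span_mod_subset[OF w(1)] by auto
  then obtain x where x: "x \<in> V" "x \<notin> span_mod j w" by blast
  have "\<forall>t<Suc j. (w(j := x)) t \<in> V" using w(1) x(1) by (simp add: less_Suc_eq)
  moreover have "indep_mod (Suc j) (w(j := x))" using indep_mod_extend[OF w(2) x(2)] .
  ultimately show ?case by blast
qed

lemma exists_basis_mod:
  assumes "card V = card C * card E ^ d"
  obtains w where "\<forall>t<d. w t \<in> V" and "indep_mod d w" and "span_mod d w = V"
proof -
  obtain w where w: "\<forall>t<d. w t \<in> V" "indep_mod d w" using exists_indep_mod[OF assms] by blast
  then have "span_mod d w = V"
    using span_mod_subset[OF w(1)] card_span_mod[OF w(2)] assms finite_V
    by (intro card_subset_eq) auto
  then show ?thesis using that w by blast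
qed

end

lemma exists_lin_indep_over:
  fixes E F :: "'a :: field set"
  assumes "is_subfield E" "is_subfield F" "E \<subseteq> F" "finite F" and "card F = card E ^ d"
  obtains w where "\<forall>t<d. w t \<in> F" and "lin_indep_over E {..<d} w"
proof -
  interpret vector_space "(*) :: 'a \<Rightarrow> 'a \<Rightarrow> 'a"
    by unfold_locales (simp_all add: algebra_simps)
  interpret subfield_vector_space "(*)" E F "{0}"
    using assms by unfold_locales
      (auto simp: subfield_0 subfield_add subfield_mult intro: finite_subset)
  obtain w where "\<forall>t<d. w t \<in> F" "indep_mod d w"
    using exists_basis_mod[of d] assms(5) by auto
  then show ?thesis using that unfolding indep_mod_def lin_indep_over_def by auto
qed

lemma lin_indep_over_frobenius:
  fixes \<gamma> :: "'b \<Rightarrow> 'a :: field"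
  assumes "additive (\<lambda>x :: 'a. x ^ Q)" and "Q > 0"
    and indep: "lin_indep_over (fixed_field Q) J \<gamma>"
  shows "lin_indep_over (fixed_field Q) J (\<lambda>j. \<gamma> j ^ Q)"
  unfolding lin_indep_over_def
proof (intro allI impI)
  interpret frob: additive "\<lambda>x :: 'a. x ^ Q" by fact
  fix k assume k: "\<forall>j\<in>J. k j \<in> fixed_field Q" and sum: "(\<Sum>j\<in>J. k j * \<gamma> j ^ Q) = 0"
  have "(\<Sum>j\<in>J. k j * \<gamma> j) ^ Q = (\<Sum>j\<in>J. (k j * \<gamma> j) ^ Q)" by (rule frob.sum)
  also have "\<dots> = (\<Sum>j\<in>J. k j * \<gamma> j ^ Q)"
    using k by (intro sum.cong) (auto simp: fixed_field_def power_mult_distrib)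
  finally have "(\<Sum>j\<in>J. k j * \<gamma> j) = 0" using sum \<open>Q > 0\<close> by simp
  then show "\<forall>j\<in>J. k j = 0" using k indep unfolding lin_indep_over_def by blast
qed

(*
  Induction on s: after scaling c j0 to 1, subtracting the Q-th power of the system removes j0
  and leaves a system of the same shape in the \<gamma> j ^ Q, which stay independent.
*)
lemma moore_kernel_trivial:
  fixes \<gamma> c :: "'b \<Rightarrow> 'a :: field"
  assumes frob: "additive (\<lambda>x :: 'a. x ^ Q)" and "Q > 0"
    and "finite J" and "card J \<le> s" and "lin_indep_over (fixed_field Q) J \<gamma>"
    and "\<forall>t<s. (\<Sum>j\<in>J. c j * \<gamma> j ^ (Q ^ t)) = 0"
  shows "\<forall>j\<in>J. c j = 0"
  using assms(3-6)
proof (induction s arbitrary: J \<gamma> c)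
  case (Suc s)
  interpret additive "\<lambda>x :: 'a. x ^ Q" by fact
  show ?case
  proof (rule ccontr)
    assume "\<not> (\<forall>j\<in>J. c j = 0)"
    then obtain j0 where j0: "j0 \<in> J" "c j0 \<noteq> 0" by auto
    define c' where "c' j = c j / c j0" for j
    define d where "d j = c' j - c' j ^ Q" for j
    have eq: "(\<Sum>j\<in>J. c' j * \<gamma> j ^ (Q ^ t)) = 0" if "t < Suc s" for t
      using Suc.prems(4) that by (simp add: c'_def sum_divide_distrib[symmetric])
    have "(\<Sum>j\<in>J - {j0}. d j * (\<gamma> j ^ Q) ^ (Q ^ t)) = 0" if "t < s" for t
    proof -
      have "(\<Sum>j\<in>J. c' j ^ Q * \<gamma> j ^ (Q ^ Suc t)) = (\<Sum>j\<in>J. c' j * \<gamma> j ^ (Q ^ t)) ^ Q"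
        by (simp add: sum power_mult_distrib mult.commute flip: power_mult)
      also have "\<dots> = 0" using eq[of t] that \<open>Q > 0\<close> by simp
      finally have "(\<Sum>j\<in>J. d j * (\<gamma> j ^ Q) ^ (Q ^ t)) = (\<Sum>j\<in>J. c' j * \<gamma> j ^ (Q ^ Suc t))"
        by (simp add: d_def algebra_simps sum_subtractf flip: power_mult)
      also have "\<dots> = 0" using eq[of "Suc t"] that by simp
      finally show ?thesis
        using Suc.prems(1) j0(1) by (simp add: sum.remove d_def c'_def j0(2))
    qed
    moreover have "lin_indep_over (fixed_field Q) (J - {j0}) (\<lambda>j. \<gamma> j ^ Q)"
      using Suc.prems(1,3) lin_indep_over_frobenius[OF frob \<open>Q > 0\<close>]
        lin_indep_over_subset subfield_0[OF is_subfield_fixed_field[OF frob \<open>Q > 0\<close>]]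
      by blast
    ultimately have d0: "\<forall>j\<in>J - {j0}. d j = 0"
      using Suc.IH[of "J - {j0}"] Suc.prems(1,2) j0(1) by simp
    have "c' j0 = 1" using j0(2) by (simp add: c'_def)
    have "c' j \<in> fixed_field Q" if "j \<in> J" for j
    proof (cases "j = j0")
      case True
      then show ?thesis using \<open>c' j0 = 1\<close> by (simp add: fixed_field_def)
    next
      case False
      then show ?thesis using that d0 by (simp add: d_def fixed_field_def)
    qed
    moreover have "(\<Sum>j\<in>J. c' j * \<gamma> j) = 0" using eq[of 0] by simp
    ultimately have "c' j0 = 0"
      using lin_indep_overD[OF Suc.prems(3)] j0(1) by blast
    then show False using \<open>c' j0 = 1\<close> by simp
  qed
qed simp

lemma vandermonde_kernel_trivial:
  fixes z a :: "'b \<Rightarrow> 'a :: field"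
  assumes "finite I" and "card I \<le> s" and "inj_on a I"
    and "\<forall>u<s. (\<Sum>i\<in>I. z i * a i ^ u) = 0"
  shows "\<forall>i\<in>I. z i = 0"
  using assms
proof (induction s arbitrary: I z)
  case (Suc s)
  show ?case
  proof (cases "I = {}")
    case False
    then obtain i0 where i0: "i0 \<in> I" by auto
    define z' where "z' i = z i * (a i - a i0)" for i
    have "(\<Sum>i\<in>I - {i0}. z' i * a i ^ u) = 0" if "u < s" for u
    proof -
      have "(\<Sum>i\<in>I. z' i * a i ^ u) = (\<Sum>i\<in>I. z i * a i ^ Suc u) - a i0 * (\<Sum>i\<in>I. z i * a i ^ u)"
        by (simp add: z'_def algebra_simps sum_subtractf sum_distrib_left)
      also have "\<dots> = 0"
        using Suc.prems(4)[rule_format, of "Suc u"] Suc.prems(4)[rule_format, of u] that by simp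
      finally show ?thesis using Suc.prems(1) i0 by (simp add: sum.remove z'_def)
    qed
    moreover have "card (I - {i0}) \<le> s" "inj_on a (I - {i0})"
      using Suc.prems(1-3) i0 by (auto intro: inj_on_subset)
    ultimately have "\<forall>i\<in>I - {i0}. z' i = 0" using Suc.IH[of "I - {i0}" z'] Suc.prems(1) by blast
    then have z0: "\<forall>i\<in>I - {i0}. z i = 0"
      using Suc.prems(3) i0 by (auto simp: z'_def inj_on_def)
    have "(\<Sum>i\<in>I. z i * a i ^ 0) = 0" using Suc.prems(4) by blast
    then have "z i0 = 0" using Suc.prems(1) i0 z0 by (simp add: sum.remove)
    then show ?thesis using z0 by blast
  qed simp
qed simp

section \<open>Embedding a field with q elements onto a fixed field\<close>

lemma
  shows map_poly_of_int_add: "map_poly of_int (f + g) = (map_poly of_int f + map_poly of_int g :: 'a :: comm_ring_1 poly)"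
    and map_poly_of_int_diff: "map_poly of_int (f - g) = (map_poly of_int f - map_poly of_int g :: 'a poly)"
    and map_poly_of_int_mult: "map_poly of_int (f * g) = (map_poly of_int f * map_poly of_int g :: 'a poly)"
  by (simp_all add: poly_eq_iff coeff_map_poly coeff_mult)

lemma map_poly_of_int_eq_0_iff_CHAR_eq:
  assumes "CHAR('a :: comm_ring_1) = CHAR('b :: comm_ring_1)"
  shows "map_poly of_int f = (0 :: 'a poly) \<longleftrightarrow> map_poly of_int f = (0 :: 'b poly)"
  using assms by (simp add: poly_eq_iff coeff_map_poly of_int_eq_0_iff_char_dvd)

definition int_frobenius_poly :: "nat \<Rightarrow> int poly" where
  "int_frobenius_poly q = monom 1 q - [:0, 1:]"

lemma poly_int_frobenius_poly:
  "poly (map_poly of_int (int_frobenius_poly q)) x = (x :: 'a :: comm_ring_1) ^ q - x"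
  by (simp add: int_frobenius_poly_def map_poly_of_int_diff map_poly_monom poly_monom
      map_poly_pCons)

lemma
  assumes "q \<ge> 2"
  shows degree_int_frobenius_poly: "degree (int_frobenius_poly q) = q"
    and lead_coeff_int_frobenius_poly: "lead_coeff (int_frobenius_poly q) = 1"
proof -
  have coeff: "coeff (int_frobenius_poly q) n = (if n = q then 1 else 0) - (if n = 1 then 1 else 0)" for n
    by (simp add: int_frobenius_poly_def coeff_pCons split: nat.split)
  show "degree (int_frobenius_poly q) = q"
    using assms by (intro antisym degree_le le_degree) (auto simp: coeff)
  then show "lead_coeff (int_frobenius_poly q) = 1" using assms by (simp add: coeff)
qed

lemma exists_monic_int_poly_smult:
  fixes t :: "int poly"
  assumes "map_poly of_int t \<noteq> (0 :: 'a :: {finite,field} poly)"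
  obtains u c where "lead_coeff u = 1" and "degree u = degree (map_poly of_int t :: 'a poly)"
    and "map_poly of_int u = Polynomial.smult c (map_poly of_int t :: 'a poly)"
proof -
  define T :: "'a poly" where "T = map_poly of_int t"
  define D where "D = degree T"
  define c1 :: int where "c1 = coeff t D ^ (card (UNIV :: 'a set) - 2)"
  have "coeff T D = of_int (coeff t D)" by (simp add: T_def coeff_map_poly)
  moreover have "coeff T D \<noteq> 0" using assms by (simp add: T_def D_def)
  ultimately have "of_int (coeff t D) \<noteq> (0 :: 'a)" by simp
  then have c1: "of_int c1 * of_int (coeff t D) = (1 :: 'a)"
    using finite_field_inverse_power by (simp add: c1_def)
  define u where "u = monom 1 D + (\<Sum>i<D. monom (c1 * coeff t i) i)"
  have coeff_u: "coeff u n = (if n = D then 1 else if n < D then c1 * coeff t n else 0)" for n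
    by (simp add: u_def coeff_sum)
  have "degree u = D" by (intro antisym degree_le le_degree) (auto simp: coeff_u)
  moreover have "map_poly of_int u = Polynomial.smult (of_int c1) T"
  proof (rule poly_eqI)
    fix n
    have "coeff T n = 0" if "n > D" using that by (simp add: D_def coeff_eq_0)
    then show "coeff (map_poly of_int u) n = coeff (Polynomial.smult (of_int c1) T) n"
      using c1 by (auto simp: coeff_map_poly coeff_u T_def)
  qed
  ultimately show ?thesis using that[of u "of_int c1"] by (simp add: coeff_u D_def T_def)
qed

lemma monic_int_poly_min_degree_divides:
  fixes \<alpha> :: "'a :: {finite,field}" and f0 g :: "int poly"
  assumes f0: "lead_coeff f0 = 1" "poly (map_poly of_int f0) \<alpha> = 0"
    and minimal: "\<And>f. lead_coeff f = 1 \<Longrightarrow> poly (map_poly of_int f) \<alpha> = 0 \<Longrightarrow> degree f0 \<le> degree f"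
    and g: "poly (map_poly of_int g) \<alpha> = 0"
  shows "\<exists>s. map_poly of_int (g - f0 * s) = (0 :: 'a poly)"
proof -
  obtain s t where st: "pseudo_divmod g f0 = (s, t)" by (cases "pseudo_divmod g f0")
  have "f0 \<noteq> 0" using f0(1) by auto
  then have gst: "g = f0 * s + t" and "t = 0 \<or> degree t < degree f0"
    using pseudo_divmod[OF _ st] f0(1) by simp_all
  have "map_poly of_int t = (0 :: 'a poly)"
  proof (rule ccontr)
    assume T: "map_poly of_int t \<noteq> (0 :: 'a poly)"
    then obtain u c where u: "lead_coeff u = 1" "degree u = degree (map_poly of_int t :: 'a poly)"
      "map_poly of_int u = Polynomial.smult c (map_poly of_int t :: 'a poly)"
      by (rule exists_monic_int_poly_smult)
    have "poly (map_poly of_int t) \<alpha> = 0"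
      using g f0(2) unfolding gst by (simp add: map_poly_of_int_add map_poly_of_int_mult)
    then have "poly (map_poly of_int u) \<alpha> = 0" using u(3) by simp
    then have "degree f0 \<le> degree u" using minimal u(1) by blast
    moreover have "degree u < degree f0"
      using u(2) map_poly_degree_leq[of "of_int :: int \<Rightarrow> 'a" t] \<open>t = 0 \<or> degree t < degree f0\<close> T
      by auto
    ultimately show False by simp
  qed
  then show ?thesis
    by (intro exI[of _ s]) (simp add: gst map_poly_of_int_add map_poly_of_int_diff)
qed

lemma exists_minimal_monic_int_poly:
  fixes \<alpha> :: "'a :: {finite,field}"
  obtains f0 :: "int poly" where "lead_coeff f0 = 1" and "degree f0 > 0"
    and "\<And>g. poly (map_poly of_int g) \<alpha> = 0 \<Longrightarrow> \<exists>s. map_poly of_int (g - f0 * s) = (0 :: 'a poly)"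
proof -
  define monic_root where
    "monic_root d \<longleftrightarrow> (\<exists>f. lead_coeff f = 1 \<and> degree f = d \<and> poly (map_poly of_int f) \<alpha> = 0)" for d
  have "card {0 :: 'a, 1} \<le> card (UNIV :: 'a set)" by (rule card_mono) auto
  then have "monic_root (card (UNIV :: 'a set))"
    unfolding monic_root_def
    using finite_field_power_card[of \<alpha>] poly_int_frobenius_poly[of "card (UNIV :: 'a set)" \<alpha>]
      degree_int_frobenius_poly lead_coeff_int_frobenius_poly
    by (intro exI[of _ "int_frobenius_poly (card (UNIV :: 'a set))"]) simp
  then have "monic_root (LEAST d. monic_root d)" by (rule LeastI)
  then obtain f0 where f0: "lead_coeff f0 = 1" "poly (map_poly of_int f0) \<alpha> = 0"
    and "degree f0 = (LEAST d. monic_root d)"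
    unfolding monic_root_def by blast
  then have minimal: "degree f0 \<le> degree f"
    if "lead_coeff f = 1" "poly (map_poly of_int f) \<alpha> = 0" for f
    using that Least_le[of monic_root "degree f"] unfolding monic_root_def by auto
  have "degree f0 > 0"
  proof (rule ccontr)
    assume "\<not> degree f0 > 0"
    then have "f0 = 1" using f0(1) by (metis lead_coeff_pCons(1) degree_0_id gr0I one_pCons)
    then show False using f0(2) by simp
  qed
  then show ?thesis using that f0(1) monic_int_poly_min_degree_divides[OF f0 minimal] by blast
qed

lemma monic_int_poly_factor_has_root:
  fixes f0 s :: "int poly"
  assumes "card (UNIV :: 'a :: {finite,field} set) = q ^ M" and "M > 0" and "q \<ge> 2"
    and factor: "map_poly of_int (int_frobenius_poly q - f0 * s) = (0 :: 'a poly)"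
    and "lead_coeff f0 = 1" and "degree f0 > 0"
  obtains \<beta> :: "'a :: {finite,field}" where "poly (map_poly of_int f0) \<beta> = 0"
proof -
  define F :: "'a poly" where "F = map_poly of_int f0"
  define P :: "'a poly" where "P = map_poly of_int (int_frobenius_poly q)"
  define S :: "'a poly" where "S = map_poly of_int s"
  have P: "P = F * S"
    using factor by (simp add: F_def P_def S_def map_poly_of_int_diff map_poly_of_int_mult)
  have "degree P = q"
    using \<open>q \<ge> 2\<close> lead_coeff_int_frobenius_poly degree_int_frobenius_poly
    by (simp add: P_def map_poly_degree_eq)
  then have "P \<noteq> 0" using \<open>q \<ge> 2\<close> by auto
  moreover have "{x. poly P x = 0} = fixed_field q"
    by (simp add: P_def poly_int_frobenius_poly fixed_field_def)
  then have "degree P \<le> card {x. poly P x = 0}"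
    using card_fixed_field[OF assms(1-3)] \<open>degree P = q\<close> by simp
  ultimately have "card {x. poly F x = 0} = degree F"
    using card_roots_factor[of F S] unfolding P by blast
  moreover have "degree F > 0"
    using assms(5,6) by (simp add: F_def map_poly_degree_eq)
  ultimately have "{x. poly F x = 0} \<noteq> {}" by (metis card_gt_0_iff)
  then obtain \<beta> where "poly F \<beta> = 0" by blast
  then show ?thesis using that by (simp add: F_def)
qed

lemma inj_field_hom:
  fixes \<psi> :: "'a :: field \<Rightarrow> 'b :: field"
  assumes add: "\<And>x y. \<psi> (x + y) = \<psi> x + \<psi> y" and mult: "\<And>x y. \<psi> (x * y) = \<psi> x * \<psi> y"
    and one: "\<psi> 1 = 1"
  shows "inj \<psi>"
proof (rule injI)
  interpret additive \<psi> by standard (rule add)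
  fix x y assume "\<psi> x = \<psi> y"
  then have "\<psi> (x - y) = 0" by (simp add: diff)
  show "x = y"
  proof (rule ccontr)
    assume "x \<noteq> y"
    then have "\<psi> ((x - y) * inverse (x - y)) = 1" using one by simp
    then show False using \<open>\<psi> (x - y) = 0\<close> by (simp add: mult)
  qed
qed

lemma exists_hom_int_poly_eval:
  fixes \<alpha> :: "'a :: field" and \<beta> :: "'b :: field"
  assumes gen: "\<And>x. \<exists>g. poly (map_poly of_int g) \<alpha> = x"
    and vanish: "\<And>g. poly (map_poly of_int g) \<alpha> = 0 \<Longrightarrow> poly (map_poly of_int g) \<beta> = 0"
  obtains \<psi> :: "'a :: field \<Rightarrow> 'b :: field" where "\<And>x y. \<psi> (x + y) = \<psi> x + \<psi> y" "\<And>x y. \<psi> (x * y) = \<psi> x * \<psi> y"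
    "\<psi> 1 = 1"
proof -
  define \<psi> where "\<psi> x = poly (map_poly of_int (SOME g. poly (map_poly of_int g) \<alpha> = x)) \<beta>" for x
  have eval: "\<psi> (poly (map_poly of_int g) \<alpha>) = poly (map_poly of_int g) \<beta>" for g
  proof -
    define g' where "g' = (SOME g'. poly (map_poly of_int g') \<alpha> = poly (map_poly of_int g) \<alpha>)"
    have "poly (map_poly of_int g') \<alpha> = poly (map_poly of_int g) \<alpha>"
      unfolding g'_def by (rule someI[of _ g]) simp
    then have "poly (map_poly of_int (g' - g)) \<beta> = 0"
      by (intro vanish) (simp add: map_poly_of_int_diff)
    then show ?thesis by (simp add: \<psi>_def g'_def map_poly_of_int_diff)
  qed
  have "\<psi> (x + y) = \<psi> x + \<psi> y" "\<psi> (x * y) = \<psi> x * \<psi> y" for x y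
  proof -
    obtain gx gy where "x = poly (map_poly of_int gx) \<alpha>" "y = poly (map_poly of_int gy) \<alpha>"
      using gen by metis
    then show "\<psi> (x + y) = \<psi> x + \<psi> y" "\<psi> (x * y) = \<psi> x * \<psi> y"
      using eval[of "gx + gy"] eval[of "gx * gy"] eval[of gx] eval[of gy]
      by (simp_all add: map_poly_of_int_add map_poly_of_int_mult)
  qed
  moreover have "\<psi> 1 = 1" using eval[of 1] by simp
  ultimately show ?thesis using that by blast
qed

lemma range_field_hom_eq_fixed_field:
  fixes \<psi> :: "'q :: {finite,field} \<Rightarrow> 'l :: {finite,field}"
  assumes mult: "\<And>x y. \<psi> (x * y) = \<psi> x * \<psi> y" and "\<psi> 1 = 1" and "inj \<psi>"
    and card_q: "card (UNIV :: 'q set) = q" and card_l: "card (UNIV :: 'l set) = q ^ M"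
    and "M > 0" and "q \<ge> 2"
  shows "range \<psi> = fixed_field q"
proof -
  have "\<psi> (x ^ n) = \<psi> x ^ n" for x n by (induction n) (simp_all add: \<open>\<psi> 1 = 1\<close> mult)
  then have "\<psi> x ^ q = \<psi> x" for x
    using finite_field_power_card[of x] card_q by metis
  then have "range \<psi> \<subseteq> fixed_field q" by (auto simp: fixed_field_def)
  moreover have "card (range \<psi>) = card (fixed_field q :: 'l set)"
    using card_image[OF \<open>inj \<psi>\<close>] card_q card_fixed_field[OF card_l \<open>M > 0\<close> \<open>q \<ge> 2\<close>] by simp
  ultimately show ?thesis by (intro card_subset_eq) auto
qed

lemma exists_field_hom_onto_fixed_field:
  assumes card_q: "card (UNIV :: 'q :: {finite,field} set) = q"
    and card_l: "card (UNIV :: 'l :: {finite,field} set) = q ^ M" and "M > 0"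
    and "CHAR('q) = CHAR('l)"
  obtains \<psi> :: "'q :: {finite,field} \<Rightarrow> 'l :: {finite,field}"
  where "\<And>x y. \<psi> (x + y) = \<psi> x + \<psi> y"
    and "\<And>x y. \<psi> (x * y) = \<psi> x * \<psi> y" and "inj \<psi>" and "range \<psi> = fixed_field q"
proof -
  have "card {0 :: 'q, 1} \<le> q" unfolding card_q[symmetric] by (rule card_mono) auto
  then have "q \<ge> 2" by simp
  obtain \<alpha> :: 'q where \<alpha>: "\<forall>x. x \<noteq> 0 \<longrightarrow> (\<exists>i. x = \<alpha> ^ i)"
    using finite_field_mult_group_cyclic by blast
  obtain f0 where f0: "lead_coeff f0 = 1" "degree f0 > 0" and
    reduce: "\<And>g. poly (map_poly of_int g) \<alpha> = 0 \<Longrightarrow> \<exists>s. map_poly of_int (g - f0 * s) = (0 :: 'q poly)"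
    using exists_minimal_monic_int_poly by blast
  have reduce_l: "\<exists>s. map_poly of_int (g - f0 * s) = (0 :: 'l poly)"
    if "poly (map_poly of_int g) \<alpha> = 0" for g
    using reduce[OF that] map_poly_of_int_eq_0_iff_CHAR_eq[OF assms(4)] by blast
  obtain \<beta> :: 'l where \<beta>: "poly (map_poly of_int f0) \<beta> = 0"
  proof -
    have "poly (map_poly of_int (int_frobenius_poly q)) \<alpha> = 0"
      using finite_field_power_card[of \<alpha>] card_q by (simp add: poly_int_frobenius_poly)
    then obtain s where "map_poly of_int (int_frobenius_poly q - f0 * s) = (0 :: 'l poly)"
      using reduce_l by blast
    then show ?thesis
      using monic_int_poly_factor_has_root[OF card_l \<open>M > 0\<close> \<open>q \<ge> 2\<close> _ f0] that by blast
  qed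
  have gen: "\<exists>g. poly (map_poly of_int g) \<alpha> = x" for x
  proof (cases "x = 0")
    case True then show ?thesis by (intro exI[of _ 0]) simp
  next
    case False
    then obtain i where "x = \<alpha> ^ i" using \<alpha> by blast
    then show ?thesis by (intro exI[of _ "monom 1 i"]) (simp add: map_poly_monom poly_monom)
  qed
  have vanish: "poly (map_poly of_int g) \<beta> = 0" if g: "poly (map_poly of_int g) \<alpha> = 0" for g
  proof -
    obtain s where "map_poly of_int (g - f0 * s) = (0 :: 'l poly)" using reduce_l[OF g] by blast
    then have "poly (map_poly of_int (g - f0 * s)) \<beta> = 0" by simp
    then show ?thesis using \<beta> by (simp add: map_poly_of_int_diff map_poly_of_int_mult)
  qed
  obtain \<psi> :: "'q \<Rightarrow> 'l" where add: "\<And>x y. \<psi> (x + y) = \<psi> x + \<psi> y"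
    and mult: "\<And>x y. \<psi> (x * y) = \<psi> x * \<psi> y" and one: "\<psi> 1 = 1"
    using exists_hom_int_poly_eval[OF gen vanish] by blast
  have "inj \<psi>" using inj_field_hom[OF add mult one] .
  then show ?thesis
    using that add mult range_field_hom_eq_fixed_field[OF mult one _ card_q card_l \<open>M > 0\<close> \<open>q \<ge> 2\<close>]
    by blast
qed

section \<open>Parity-check matrices\<close>

(* P l t is the entry in row t and column l of an m x r parity-check matrix over E. *)
definition parity_check_dist_ge :: "'a :: field set \<Rightarrow> (nat \<Rightarrow> nat \<Rightarrow> 'a) \<Rightarrow> nat \<Rightarrow> nat \<Rightarrow> nat \<Rightarrow> bool" where
  "parity_check_dist_ge E P r m d \<longleftrightarrow>
     (\<forall>\<kappa>. (\<forall>l<r. \<kappa> l \<in> E) \<longrightarrow> (\<exists>l<r. \<kappa> l \<noteq> 0) \<longrightarrow> (\<forall>t<m. (\<Sum>l<r. \<kappa> l * P l t) = 0) \<longrightarrow>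
       d \<le> hamming_weight \<kappa> r)"

lemma parity_check_dist_ge_identity:
  assumes "r \<le> m"
  shows "parity_check_dist_ge E (\<lambda>l t. if l = t then 1 else 0) r m d"
proof -
  have "\<kappa> l = 0"
    if ker: "\<forall>t<m. (\<Sum>l'<r. \<kappa> l' * (if l' = t then 1 else 0)) = 0" and "l < r"
    for \<kappa> :: "nat \<Rightarrow> 'a" and l
  proof -
    have "(\<Sum>l'<r. \<kappa> l' * (if l' = l then 1 else 0)) = (\<Sum>l'<r. if l' = l then \<kappa> l' else 0)"
      by (intro sum.cong) auto
    also have "\<dots> = \<kappa> l" using \<open>l < r\<close> by simp
    finally show ?thesis using ker \<open>l < r\<close> assms by simp
  qed
  then show ?thesis unfolding parity_check_dist_ge_def by blast
qed

lemma parity_check_dist_ge_hom_image: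
  fixes \<psi> :: "'a :: field \<Rightarrow> 'b :: field"
  assumes add: "\<And>x y. \<psi> (x + y) = \<psi> x + \<psi> y" and mult: "\<And>x y. \<psi> (x * y) = \<psi> x * \<psi> y"
    and "inj \<psi>" and "parity_check_dist_ge UNIV P r m d"
  shows "parity_check_dist_ge (range \<psi>) (\<lambda>l t. \<psi> (P l t)) r m d"
  unfolding parity_check_dist_ge_def
proof (intro allI impI)
  interpret additive \<psi> by standard (rule add)
  fix \<kappa> assume \<kappa>: "\<forall>l<r. \<kappa> l \<in> range \<psi>" and nz: "\<exists>l<r. \<kappa> l \<noteq> 0"
    and ker: "\<forall>t<m. (\<Sum>l<r. \<kappa> l * \<psi> (P l t)) = 0"
  define \<kappa>' where "\<kappa>' l = inv_into UNIV \<psi> (\<kappa> l)" for l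
  have \<kappa>': "\<psi> (\<kappa>' l) = \<kappa> l" if "l < r" for l
    using \<kappa> that by (simp add: \<kappa>'_def f_inv_into_f)
  have zero_iff: "\<kappa>' l = 0 \<longleftrightarrow> \<kappa> l = 0" if "l < r" for l
    using inj_eq[OF \<open>inj \<psi>\<close>, of "\<kappa>' l" 0] \<kappa>'[OF that] zero by simp
  then have weight: "hamming_weight \<kappa>' r = hamming_weight \<kappa> r"
    unfolding hamming_weight_def by (intro arg_cong[where f = card] Collect_cong) auto
  have ker': "\<forall>t<m. (\<Sum>l<r. \<kappa>' l * P l t) = 0"
  proof (intro allI impI)
    fix t assume "t < m"
    have "\<psi> (\<Sum>l<r. \<kappa>' l * P l t) = (\<Sum>l<r. \<kappa> l * \<psi> (P l t))"
      by (simp add: sum mult \<kappa>')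
    then show "(\<Sum>l<r. \<kappa>' l * P l t) = 0"
      using ker \<open>t < m\<close> inj_eq[OF \<open>inj \<psi>\<close>, of _ 0] zero by simp
  qed
  have "\<exists>l<r. \<kappa>' l \<noteq> 0" using nz zero_iff by blast
  then have "d \<le> hamming_weight \<kappa>' r"
    using assms(4) ker' unfolding parity_check_dist_ge_def by blast
  then show "d \<le> hamming_weight \<kappa> r" using weight by simp
qed

lemma sum_fun_apply: "(\<Sum>i\<in>A. f i) x = (\<Sum>i\<in>A. f i x)"
  by (induction A rule: infinite_finite_induct) simp_all

lemma
  shows finite_vectors: "finite {v :: nat \<Rightarrow> 'a :: {finite,zero}. \<forall>l\<ge>r. v l = 0}"
    and card_vectors: "card {v :: nat \<Rightarrow> 'a. \<forall>l\<ge>r. v l = 0} = card (UNIV :: 'a set) ^ r"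
proof -
  have bij: "bij_betw (\<lambda>v. restrict v {..<r}) {v :: nat \<Rightarrow> 'a. \<forall>l\<ge>r. v l = 0} (\<Pi>\<^sub>E l\<in>{..<r}. UNIV)"
    by (rule bij_betwI[where g = "\<lambda>f l. if l < r then f l else 0"])
      (auto simp: fun_eq_iff PiE_def extensional_def)
  then show "finite {v :: nat \<Rightarrow> 'a. \<forall>l\<ge>r. v l = 0}"
    by (simp add: bij_betw_finite finite_PiE)
  show "card {v :: nat \<Rightarrow> 'a. \<forall>l\<ge>r. v l = 0} = card (UNIV :: 'a set) ^ r"
    using bij by (simp add: bij_betw_same_card card_PiE)
qed

lemma exists_parity_check_matrix:
  fixes C :: "(nat \<Rightarrow> 'a :: {finite,field}) set"
  assumes C_vectors: "C \<subseteq> {v. \<forall>l\<ge>r. v l = 0}"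
    and C_0: "0 \<in> C" and C_add: "\<And>x y. x \<in> C \<Longrightarrow> y \<in> C \<Longrightarrow> x + y \<in> C"
    and C_scale: "\<And>a x. x \<in> C \<Longrightarrow> (\<lambda>l. a * x l) \<in> C"
    and card_C: "card C * card (UNIV :: 'a set) ^ m = card (UNIV :: 'a set) ^ r"
  obtains P :: "nat \<Rightarrow> nat \<Rightarrow> 'a"
  where "\<And>\<kappa>. \<forall>t<m. (\<Sum>l<r. \<kappa> l * P l t) = 0 \<Longrightarrow> (\<lambda>l. if l < r then \<kappa> l else 0) \<in> C"
proof -
  define sc :: "'a \<Rightarrow> (nat \<Rightarrow> 'a) \<Rightarrow> nat \<Rightarrow> 'a" where "sc a v = (\<lambda>l. a * v l)" for a v
  define V where "V = {v :: nat \<Rightarrow> 'a. \<forall>l\<ge>r. v l = 0}"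
  interpret vector_space sc by unfold_locales (simp_all add: sc_def fun_eq_iff algebra_simps)
  interpret subfield_vector_space sc UNIV V C
    using C_vectors C_0 C_add C_scale
    by unfold_locales (auto simp: is_subfield_def V_def sc_def subspace_def finite_vectors)
  have "card V = card C * card (UNIV :: 'a set) ^ m" using card_C by (simp add: V_def card_vectors)
  then obtain w where w: "span_mod m w = V" by (rule exists_basis_mod)
  define e :: "nat \<Rightarrow> nat \<Rightarrow> 'a" where "e l = (\<lambda>j. if j = l then 1 else 0)" for l
  have "\<exists>c k. c \<in> C \<and> e l = c + (\<Sum>t<m. sc (k t) (w t))" if "l < r" for l
  proof -
    have "e l \<in> span_mod m w" using that by (simp add: w V_def e_def)
    then show ?thesis unfolding span_mod_def by auto
  qed
  then obtain c P where dec: "\<And>l. l < r \<Longrightarrow> c l \<in> C \<and> e l = c l + (\<Sum>t<m. sc (P l t) (w t))"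
    by metis
  have "(\<lambda>l. if l < r then \<kappa> l else 0) \<in> C" if ker: "\<forall>t<m. (\<Sum>l<r. \<kappa> l * P l t) = 0" for \<kappa>
  proof -
    have "(\<lambda>j. if j < r then \<kappa> j else 0) = (\<Sum>l<r. sc (\<kappa> l) (e l))"
      by (simp add: fun_eq_iff sum_fun_apply sc_def e_def if_distrib[of "(*) _"] cong: if_cong)
    also have "\<dots> = (\<Sum>l<r. sc (\<kappa> l) (c l)) + (\<Sum>t<m. sc (\<Sum>l<r. \<kappa> l * P l t) (w t))"
      using dec by (simp add: scale_right_distrib scale_sum_right sum.distrib scale_sum_left
          sum.swap[of _ "{..<m}"])
    also have "\<dots> = (\<Sum>l<r. sc (\<kappa> l) (c l))" using ker by simp
    finally have "(\<lambda>j. if j < r then \<kappa> j else 0) = (\<Sum>l<r. sc (\<kappa> l) (c l))" .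
    moreover have "(\<Sum>l<r. sc (\<kappa> l) (c l)) \<in> C"
      using dec by (intro subspace_sum[OF subspace_C] subspace_scale[OF subspace_C]) auto
    ultimately show ?thesis by simp
  qed
  then show ?thesis using that by blast
qed

definition truncated_codeword :: "(nat \<Rightarrow> nat \<Rightarrow> 'a :: field) \<Rightarrow> nat \<Rightarrow> nat \<Rightarrow> (nat \<Rightarrow> 'a) \<Rightarrow> nat \<Rightarrow> 'a" where
  "truncated_codeword G k r u = (\<lambda>l. if l < r then codeword G k u l else 0)"

lemma
  shows truncated_codeword_add:
      "truncated_codeword G k r u + truncated_codeword G k r u' = truncated_codeword G k r (\<lambda>i. u i + u' i)"
    and truncated_codeword_diff:
      "truncated_codeword G k r u - truncated_codeword G k r u' = truncated_codeword G k r (\<lambda>i. u i - u' i)"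
    and truncated_codeword_scale:
      "(\<lambda>l. a * truncated_codeword G k r u l) = truncated_codeword G k r (\<lambda>i. a * u i)"
  by (simp_all add: fun_eq_iff truncated_codeword_def codeword_def algebra_simps sum.distrib
      sum_subtractf sum_distrib_left)

lemma card_range_truncated_codeword:
  fixes G :: "nat \<Rightarrow> nat \<Rightarrow> 'a :: {finite,field}"
  assumes "rows_lin_indep G k r"
  shows "card (range (truncated_codeword G k r)) = card (UNIV :: 'a set) ^ k"
proof -
  have "inj_on (truncated_codeword G k r) (\<Pi>\<^sub>E i\<in>{..<k}. UNIV)"
  proof (rule inj_onI)
    fix u u' assume u: "u \<in> (\<Pi>\<^sub>E i\<in>{..<k}. UNIV)" "u' \<in> (\<Pi>\<^sub>E i\<in>{..<k}. UNIV)"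
      and "truncated_codeword G k r u = truncated_codeword G k r u'"
    then have "truncated_codeword G k r (\<lambda>i. u i - u' i) = 0" by (simp flip: truncated_codeword_diff)
    then have "codeword G k (\<lambda>i. u i - u' i) j = 0" if "j < r" for j
      using fun_cong[of _ _ j] that by (fastforce simp: truncated_codeword_def)
    then have "\<forall>i<k. u i - u' i = 0"
      using assms unfolding rows_lin_indep_def by blast
    then show "u = u'" using u by (intro PiE_ext) auto
  qed
  moreover have "range (truncated_codeword G k r) = truncated_codeword G k r ` (\<Pi>\<^sub>E i\<in>{..<k}. UNIV)"
  proof (intro equalityI subsetI)
    fix v assume "v \<in> range (truncated_codeword G k r)"
    then obtain u where "v = truncated_codeword G k r u" by auto
    moreover have "truncated_codeword G k r u = truncated_codeword G k r (restrict u {..<k})"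
      by (simp add: fun_eq_iff truncated_codeword_def codeword_def)
    ultimately show "v \<in> truncated_codeword G k r ` (\<Pi>\<^sub>E i\<in>{..<k}. UNIV)" by auto
  qed auto
  ultimately show ?thesis by (simp add: card_image card_PiE)
qed

lemma exists_parity_check_of_code:
  fixes G :: "nat \<Rightarrow> nat \<Rightarrow> 'a :: {finite,field}"
  assumes code: "lin_code_ge G r (r - m) d" and "m < r"
  obtains P :: "nat \<Rightarrow> nat \<Rightarrow> 'a" where "parity_check_dist_ge UNIV P r m d"
proof -
  define C where "C = range (truncated_codeword G (r - m) r)"
  have card: "card C * card (UNIV :: 'a set) ^ m = card (UNIV :: 'a set) ^ r"
    using card_range_truncated_codeword[of G "r - m" r] code \<open>m < r\<close>
    by (simp add: C_def lin_code_ge_def flip: power_add)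
  have vectors: "C \<subseteq> {v. \<forall>l\<ge>r. v l = 0}" by (auto simp: C_def truncated_codeword_def)
  have zero: "0 \<in> C" unfolding C_def
    by (rule range_eqI[of _ _ "\<lambda>_. 0"]) (simp add: fun_eq_iff truncated_codeword_def codeword_def)
  have add: "x + y \<in> C" if "x \<in> C" "y \<in> C" for x y
    using that by (auto simp: C_def truncated_codeword_add)
  have scale: "(\<lambda>l. a * x l) \<in> C" if "x \<in> C" for a x
    using that by (auto simp: C_def truncated_codeword_scale)
  obtain P :: "nat \<Rightarrow> nat \<Rightarrow> 'a" where
    P: "\<And>\<kappa>. \<forall>t<m. (\<Sum>l<r. \<kappa> l * P l t) = 0 \<Longrightarrow> (\<lambda>l. if l < r then \<kappa> l else 0) \<in> C"
    using exists_parity_check_matrix[OF vectors zero add scale card] by blast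
  have "d \<le> hamming_weight \<kappa> r"
    if nz: "\<exists>l<r. \<kappa> l \<noteq> 0" and ker: "\<forall>t<m. (\<Sum>l<r. \<kappa> l * P l t) = 0" for \<kappa>
  proof -
    obtain u where "(\<lambda>l. if l < r then \<kappa> l else 0) = truncated_codeword G (r - m) r u"
      using P[OF ker] by (auto simp: C_def)
    then have same: "\<kappa> l = codeword G (r - m) u l" if "l < r" for l
      using fun_cong[of _ _ l] that by (fastforce simp: truncated_codeword_def)
    then have "\<exists>j<r. codeword G (r - m) u j \<noteq> 0" using nz by auto
    then have "d \<le> hamming_weight (codeword G (r - m) u) r"
      using code unfolding lin_code_ge_def by blast
    also have "hamming_weight (codeword G (r - m) u) r = hamming_weight \<kappa> r"
      unfolding hamming_weight_def using same by (intro arg_cong[where f = card] Collect_cong) auto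
    finally show ?thesis .
  qed
  then show ?thesis using that unfolding parity_check_dist_ge_def by blast
qed

lemma exists_parity_check_in_fixed_field:
  assumes card_l: "card (UNIV :: 'l :: {finite,field} set) = q ^ M" and "M > 0"
    and "prime p" and "q = p ^ k"
    and code: "m \<ge> r \<or> (m < r \<and> card (UNIV :: 'q :: {finite,field} set) = q \<and>
      (\<exists>G :: nat \<Rightarrow> nat \<Rightarrow> 'q. lin_code_ge G r (r - m) d))"
  obtains P :: "nat \<Rightarrow> nat \<Rightarrow> 'l :: {finite,field}"
  where "\<forall>l t. P l t \<in> fixed_field q" and "parity_check_dist_ge (fixed_field q) P r m d"
proof (cases "r \<le> m")
  case True
  have "q > 0" using \<open>prime p\<close> \<open>q = p ^ k\<close> by (simp add: prime_gt_0_nat)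
  then have "\<forall>l t. (if l = t then 1 else 0 :: 'l) \<in> fixed_field q" by (simp add: fixed_field_def)
  then show ?thesis by (rule that[OF _ parity_check_dist_ge_identity[OF True]])
next
  case False
  then obtain G :: "nat \<Rightarrow> nat \<Rightarrow> 'q" where G: "lin_code_ge G r (r - m) d"
    and "m < r" and card_q: "card (UNIV :: 'q set) = q"
    using code by auto
  obtain Pq :: "nat \<Rightarrow> nat \<Rightarrow> 'q" where Pq: "parity_check_dist_ge UNIV Pq r m d"
    using exists_parity_check_of_code[OF G \<open>m < r\<close>] by blast
  have "CHAR('q) = p" using CHAR_finite_field[OF \<open>prime p\<close>] card_q \<open>q = p ^ k\<close> by blast
  moreover have "CHAR('l) = p"
    using CHAR_finite_field[OF \<open>prime p\<close>] card_l \<open>q = p ^ k\<close> by (metis power_mult)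
  ultimately obtain \<psi> :: "'q \<Rightarrow> 'l" where add: "\<And>x y. \<psi> (x + y) = \<psi> x + \<psi> y"
    and mult: "\<And>x y. \<psi> (x * y) = \<psi> x * \<psi> y" and "inj \<psi>" and range: "range \<psi> = fixed_field q"
    using exists_field_hom_onto_fixed_field[OF card_q card_l \<open>M > 0\<close>] by metis
  have "\<forall>l t. \<psi> (Pq l t) \<in> fixed_field q" using range by blast
  then show ?thesis
    by (rule that[OF _ parity_check_dist_ge_hom_image[OF add mult \<open>inj \<psi>\<close> Pq, unfolded range]])
qed

section \<open>The construction\<close>

lemma parity_check_dist_ge_combine:
  assumes K: "is_subfield K" and P: "\<forall>l t. P l t \<in> K"
    and dist: "parity_check_dist_ge K P r m d" and \<theta>: "lin_indep_over K {..<m} \<theta>"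
  shows "parity_check_dist_ge K (\<lambda>l _. \<Sum>t<m. P l t * \<theta> t) r 1 d"
  unfolding parity_check_dist_ge_def
proof (intro allI impI)
  fix \<kappa> assume \<kappa>: "\<forall>l<r. \<kappa> l \<in> K" and nz: "\<exists>l<r. \<kappa> l \<noteq> 0"
    and ker: "\<forall>t :: nat < 1. (\<Sum>l<r. \<kappa> l * (\<Sum>t<m. P l t * \<theta> t)) = 0"
  have sum: "(\<Sum>t<m. (\<Sum>l<r. \<kappa> l * P l t) * \<theta> t) = 0"
    using ker[rule_format, of 0] by (simp add: sum_distrib_left sum_distrib_right mult.assoc sum.swap[of _ "{..<m}"])
  have coeff: "(\<Sum>l<r. \<kappa> l * P l t) \<in> K" for t
    using \<kappa> P by (auto intro!: subfield_sum[OF K] subfield_mult[OF K])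
  have "\<forall>t<m. (\<Sum>l<r. \<kappa> l * P l t) = 0"
    using lin_indep_overD[OF \<theta> coeff sum] by simp
  then show "d \<le> hamming_weight \<kappa> r"
    using dist \<kappa> nz unfolding parity_check_dist_ge_def by blast
qed

lemma lin_indep_over_power_combinations:
  fixes a \<omega> :: "nat \<Rightarrow> 'a :: field"
  assumes F: "is_subfield F" and "finite I" "card I \<le> s" "inj_on a I" "a ` I \<subseteq> F"
    and \<omega>: "lin_indep_over F {..<s} \<omega>"
  shows "lin_indep_over F I (\<lambda>i. \<Sum>u<s. a i ^ u * \<omega> u)"
  unfolding lin_indep_over_def
proof (intro allI impI)
  fix z assume z: "\<forall>i\<in>I. z i \<in> F" and "(\<Sum>i\<in>I. z i * (\<Sum>u<s. a i ^ u * \<omega> u)) = 0"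
  then have sum: "(\<Sum>u<s. (\<Sum>i\<in>I. z i * a i ^ u) * \<omega> u) = 0"
    by (simp add: sum_distrib_left sum_distrib_right mult.assoc sum.swap[of _ I])
  have coeff: "(\<Sum>i\<in>I. z i * a i ^ u) \<in> F" for u
    using z assms(5) by (auto intro!: subfield_sum[OF F] subfield_mult[OF F] subfield_power[OF F])
  have "\<forall>u<s. (\<Sum>i\<in>I. z i * a i ^ u) = 0"
    using lin_indep_overD[OF \<omega> coeff sum] by simp
  then show "\<forall>i\<in>I. z i = 0" using vandermonde_kernel_trivial assms(2-4) by blast
qed

lemma lin_indep_over_differences:
  fixes y :: "nat \<Rightarrow> 'a :: field" and pos :: "'b \<Rightarrow> nat"
  assumes K: "is_subfield K" and dist: "parity_check_dist_ge K (\<lambda>l _. y l) r 1 (h + 2)"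
    and J: "finite J" "card J \<le> h" "inj_on pos J" "pos ` J \<subseteq> {..<r}"
    and \<rho>: "\<rho> < r" "\<rho> \<notin> pos ` J"
  shows "lin_indep_over K J (\<lambda>j. y (pos j) - y \<rho>)"
  unfolding lin_indep_over_def
proof (intro allI impI ballI)
  fix k j0 assume k: "\<forall>j\<in>J. k j \<in> K" and sum: "(\<Sum>j\<in>J. k j * (y (pos j) - y \<rho>)) = 0"
    and "j0 \<in> J"
  define \<kappa> where "\<kappa> l = (if l \<in> pos ` J then k (the_inv_into J pos l) else 0) -
    (if l = \<rho> then (\<Sum>j\<in>J. k j) else 0)" for l
  have \<kappa>_pos: "\<kappa> (pos j) = k j" if "j \<in> J" for j
    using that \<rho>(2) J(3) by (auto simp: \<kappa>_def the_inv_into_f_f)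
  have "\<kappa> l \<in> K" for l
    using k K the_inv_into_into[OF J(3)]
    by (auto simp: \<kappa>_def subfield_0 subfield_diff subfield_sum)
  moreover have "(\<Sum>l<r. \<kappa> l * y l) = 0"
  proof -
    have "(\<Sum>l<r. (if l \<in> pos ` J then k (the_inv_into J pos l) else 0) * y l)
        = (\<Sum>l\<in>pos ` J. k (the_inv_into J pos l) * y l)"
      using J(4) by (simp add: if_distrib[of "\<lambda>x. x * _"] sum.If_cases Int_absorb1 cong: if_cong)
    also have "\<dots> = (\<Sum>j\<in>J. k j * y (pos j))"
      using J(3) by (simp add: sum.reindex the_inv_into_f_f)
    finally have first: "(\<Sum>l<r. (if l \<in> pos ` J then k (the_inv_into J pos l) else 0) * y l)
        = (\<Sum>j\<in>J. k j * y (pos j))" .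
    have second: "(\<Sum>l<r. (if l = \<rho> then (\<Sum>j\<in>J. k j) else 0) * y l) = (\<Sum>j\<in>J. k j) * y \<rho>"
      using \<rho>(1) by (simp add: if_distrib[of "\<lambda>x. x * _"] cong: if_cong)
    have "(\<Sum>l<r. \<kappa> l * y l) = (\<Sum>j\<in>J. k j * y (pos j)) - (\<Sum>j\<in>J. k j) * y \<rho>"
      by (simp add: \<kappa>_def left_diff_distrib sum_subtractf first second)
    also have "\<dots> = (\<Sum>j\<in>J. k j * (y (pos j) - y \<rho>))"
      by (simp add: right_diff_distrib sum_subtractf sum_distrib_right)
    finally show ?thesis using sum by simp
  qed
  moreover have "hamming_weight \<kappa> r < h + 2"
  proof -
    have "{l. l < r \<and> \<kappa> l \<noteq> 0} \<subseteq> insert \<rho> (pos ` J)" by (auto simp: \<kappa>_def)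
    then have "hamming_weight \<kappa> r \<le> card (insert \<rho> (pos ` J))"
      unfolding hamming_weight_def using J(1) by (intro card_mono) auto
    also have "\<dots> \<le> Suc (card J)" using J(1) card_image_le[OF J(1), of pos] card_insert_le_m1
      by (metis card_insert_if finite_imageI le_SucI not_less_eq_eq)
    finally show ?thesis using J(2) by simp
  qed
  ultimately have "\<forall>l<r. \<kappa> l = 0"
    using dist unfolding parity_check_dist_ge_def by (metis less_one not_le)
  then show "k j0 = 0" using \<kappa>_pos[OF \<open>j0 \<in> J\<close>] J(4) \<open>j0 \<in> J\<close> by auto
qed

lemma lin_indep_over_block_differences:
  fixes y v :: "nat \<Rightarrow> 'a :: field"
  assumes K: "is_subfield K" and F: "is_subfield F" and "K \<subseteq> F" and "r > 0"
    and y: "\<forall>l. y l \<in> F" and dist: "parity_check_dist_ge K (\<lambda>l _. y l) r 1 (h + 2)"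
    and v: "\<And>I. I \<subseteq> {..<g} \<Longrightarrow> card I \<le> h \<Longrightarrow> lin_indep_over F I v"
    and S: "finite S" "card S \<le> h" "\<forall>j\<in>S. j div r < g"
    and \<rho>: "\<forall>i. \<rho> i < r" "\<forall>j\<in>S. j mod r \<noteq> \<rho> (j div r)"
  shows "lin_indep_over K S (\<lambda>j. (y (j mod r) - y (\<rho> (j div r))) * v (j div r))"
  unfolding lin_indep_over_def
proof (intro allI impI ballI)
  fix k j0 assume k: "\<forall>j\<in>S. k j \<in> K"
    and sum: "(\<Sum>j\<in>S. k j * ((y (j mod r) - y (\<rho> (j div r))) * v (j div r))) = 0"
    and "j0 \<in> S"
  define block where "block i = {j \<in> S. j div r = i}" for i
  define z where "z i = (\<Sum>j\<in>block i. k j * (y (j mod r) - y (\<rho> i)))" for i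
  define I where "I = (\<lambda>j. j div r) ` S"
  have "(\<Sum>i\<in>I. z i * v i) = 0"
  proof -
    have "(\<Sum>i\<in>I. z i * v i)
        = (\<Sum>i\<in>I. \<Sum>j\<in>block i. k j * ((y (j mod r) - y (\<rho> (j div r))) * v (j div r)))"
      by (intro sum.cong refl) (auto simp: z_def block_def sum_distrib_right mult.assoc)
    also have "\<dots> = 0"
      using sum S(1) unfolding block_def I_def by (subst sum.group) auto
    finally show ?thesis .
  qed
  moreover have "z i \<in> F" for i
    using k y \<open>K \<subseteq> F\<close> unfolding z_def block_def
    by (auto intro!: subfield_sum[OF F] subfield_mult[OF F] subfield_diff[OF F])
  moreover have "lin_indep_over F I v"
  proof (rule v)
    show "I \<subseteq> {..<g}" using S(3) by (auto simp: I_def)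
    show "card I \<le> h" using card_image_le[OF S(1)] S(2) unfolding I_def by (rule le_trans)
  qed
  ultimately have "z (j0 div r) = 0"
    using lin_indep_overD[of F I v z] \<open>j0 \<in> S\<close> by (auto simp: I_def)
  moreover have "lin_indep_over K (block (j0 div r)) (\<lambda>j. y (j mod r) - y (\<rho> (j0 div r)))"
  proof (rule lin_indep_over_differences[OF K dist])
    show "finite (block (j0 div r))" "card (block (j0 div r)) \<le> h"
      using S(1,2) card_mono[OF S(1), of "block (j0 div r)"] by (auto simp: block_def)
    show "inj_on (\<lambda>j. j mod r) (block (j0 div r))"
      by (rule inj_onI) (metis (mono_tags) block_def div_mult_mod_eq mem_Collect_eq)
    show "(\<lambda>j. j mod r) ` block (j0 div r) \<subseteq> {..<r}" using \<open>r > 0\<close> by auto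
    show "\<rho> (j0 div r) < r" "\<rho> (j0 div r) \<notin> (\<lambda>j. j mod r) ` block (j0 div r)"
      using \<rho> by (auto simp: block_def)
  qed
  ultimately show "k j0 = 0"
    using lin_indep_overD[of K "block (j0 div r)"] k \<open>j0 \<in> S\<close>
    unfolding z_def block_def by auto
qed

lemma lin_code_repetition:
  assumes "r > 0"
  shows "lin_code (\<lambda>_ _. 1 :: 'a :: field) r 1 r"
proof -
  have cw: "codeword (\<lambda>_ _. 1 :: 'a) 1 u = (\<lambda>_. u 0)" for u by (simp add: codeword_def)
  have "card {j. j < r \<and> u 0 \<noteq> 0} = r" if "u 0 \<noteq> (0 :: 'a)" for u using that by simp
  then show ?thesis
    using assms unfolding lin_code_def lin_code_ge_def rows_lin_indep_def hamming_weight_def cw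
    by (auto intro!: exI[of _ "\<lambda>_. 1"])
qed

lemma mem_block_iff_div:
  assumes "(r :: nat) > 0"
  shows "j \<in> {i * r..<(i + 1) * r} \<longleftrightarrow> j div r = i"
  using assms
  by (metis atLeastLessThan_iff Suc_eq_plus1 div_less_iff_less_mult div_times_less_eq_dividend
      le_less_Suc_eq less_eq_div_iff_mult_less_eq)

lemma block_pcm_repetition_row:
  assumes "i < g" and "r > 0"
  shows "block_pcm g r 1 (\<lambda>_ _ _. 1) D i j = (if j div r = i then 1 else 0)"
  using assms mem_block_iff_div[OF \<open>r > 0\<close>, of j i] by (simp add: block_pcm_def)

lemma block_pcm_global_row: "block_pcm g r a A D (g * a + t) j = D t j"
  by (simp add: block_pcm_def)

lemma sum_over_blocks:
  fixes S :: "nat set" and c f :: "nat \<Rightarrow> 'a :: semiring_0"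
  assumes "finite S" and "\<forall>j\<in>S. j div r < g"
  shows "(\<Sum>j\<in>S. c j * f (j div r)) = (\<Sum>i<g. (\<Sum>j\<in>S. if j div r = i then c j else 0) * f i)"
proof -
  have "(\<Sum>j\<in>S. c j * f (j div r)) = (\<Sum>i<g. \<Sum>j\<in>{j \<in> S. j div r = i}. c j * f (j div r))"
    using assms by (intro sum.group[symmetric]) auto
  also have "\<dots> = (\<Sum>i<g. \<Sum>j\<in>{j \<in> S. j div r = i}. c j * f i)"
    by (intro sum.cong refl) auto
  also have "\<dots> = (\<Sum>i<g. (\<Sum>j\<in>{j \<in> S. j div r = i}. c j) * f i)"
    by (simp add: sum_distrib_right)
  also have "\<dots> = (\<Sum>i<g. (\<Sum>j\<in>S. if j div r = i then c j else 0) * f i)"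
    using assms(1) by (simp add: sum.inter_filter)
  finally show ?thesis .
qed


lemma sum_block_differences_power:
  fixes \<beta> c :: "nat \<Rightarrow> 'a :: comm_ring_1"
  assumes "additive (\<lambda>x :: 'a. x ^ Q)" and "finite S" and "\<forall>j\<in>S. j div r < g"
  shows "(\<Sum>j\<in>S. c j * (\<beta> j - \<beta> (rep (j div r))) ^ Q)
    = (\<Sum>j\<in>S. c j * \<beta> j ^ Q) - (\<Sum>i<g. (\<Sum>j\<in>S. if j div r = i then c j else 0) * \<beta> (rep i) ^ Q)"
proof -
  interpret frob: additive "\<lambda>x :: 'a. x ^ Q" by fact
  have "(\<Sum>j\<in>S. c j * (\<beta> j - \<beta> (rep (j div r))) ^ Q)
      = (\<Sum>j\<in>S. c j * \<beta> j ^ Q) - (\<Sum>j\<in>S. c j * \<beta> (rep (j div r)) ^ Q)"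
    by (simp add: frob.diff right_diff_distrib sum_subtractf)
  then show ?thesis
    using sum_over_blocks[OF assms(2,3), of c "\<lambda>i. \<beta> (rep i) ^ Q"] by simp
qed

(* Subtracting the representative of each group turns the global rows into a Moore system. *)
lemma repetition_blocks_kernel_trivial:
  fixes \<beta> c :: "nat \<Rightarrow> 'a :: field"
  assumes frob: "additive (\<lambda>x :: 'a. x ^ q)" "q > 0"
    and S: "S \<subseteq> {..<g * r}" "card (S - rep ` {..<g}) \<le> h"
    and rep: "\<And>i. i < g \<Longrightarrow> rep i \<in> S \<and> rep i div r = i"
    and indep: "lin_indep_over (fixed_field q) (S - rep ` {..<g}) (\<lambda>j. \<beta> j - \<beta> (rep (j div r)))"
    and local: "\<And>i. i < g \<Longrightarrow> (\<Sum>j\<in>S. if j div r = i then c j else 0) = 0"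
    and global: "\<And>t. t < h \<Longrightarrow> (\<Sum>j\<in>S. c j * \<beta> j ^ (q ^ t)) = 0"
  shows "\<forall>j\<in>S. c j = 0"
proof -
  define R where "R = rep ` {..<g}"
  define \<gamma> where "\<gamma> = (\<lambda>j. \<beta> j - \<beta> (rep (j div r)))"
  have "finite S" using S(1) finite_subset by blast
  have S_blocks: "\<forall>j\<in>S. j div r < g"
    using S(1) by (auto simp: less_mult_imp_div_less mult.commute)
  have "(\<Sum>j\<in>S - R. c j * \<gamma> j ^ (q ^ t)) = 0" if "t < h" for t
  proof -
    have "\<gamma> j = 0" if "j \<in> R" for j using that rep by (auto simp: R_def \<gamma>_def)
    then have "(\<Sum>j\<in>S - R. c j * \<gamma> j ^ (q ^ t)) = (\<Sum>j\<in>S. c j * \<gamma> j ^ (q ^ t))"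
      using \<open>finite S\<close> \<open>q > 0\<close> by (intro sum.mono_neutral_left) auto
    also have "\<dots> = 0"
      using sum_block_differences_power[OF additive_power_power[OF frob(1)] \<open>finite S\<close> S_blocks]
        local global[OF that] by (simp add: \<gamma>_def)
    finally show ?thesis .
  qed
  moreover have "lin_indep_over (fixed_field q) (S - R) \<gamma>" using indep by (simp add: R_def \<gamma>_def)
  ultimately have "\<forall>j\<in>S - R. c j = 0"
    using moore_kernel_trivial[OF frob, of "S - R" h \<gamma> c] S(2) \<open>finite S\<close> by (simp add: R_def)
  moreover have "c (rep i) = 0" if "i < g" for i
  proof -
    have "(\<Sum>j\<in>S - {rep i}. if j div r = i then c j else 0) = 0"
    proof (intro sum.neutral ballI)
      fix j assume j: "j \<in> S - {rep i}"
      have "j \<notin> R" if "j div r = i" using j that rep by (auto simp: R_def)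
      then show "(if j div r = i then c j else 0) = 0" using j \<open>\<forall>j\<in>S - R. c j = 0\<close> by auto
    qed
    moreover have "(\<Sum>j\<in>S. if j div r = i then c j else 0)
        = (if rep i div r = i then c (rep i) else 0) + (\<Sum>j\<in>S - {rep i}. if j div r = i then c j else 0)"
      using rep[OF that] by (intro sum.remove[OF \<open>finite S\<close>]) blast
    ultimately have "(\<Sum>j\<in>S. if j div r = i then c j else 0) = c (rep i)"
      using rep[OF that] by simp
    then show ?thesis using local[OF that] by simp
  qed
  ultimately show ?thesis unfolding R_def by blast
qed

lemma exists_block_representatives:
  fixes r :: nat
  assumes "r > 0" and "\<forall>i<g. 1 \<le> card (S \<inter> {i * r..<(i + 1) * r})"
  obtains rep where "\<And>i. i < g \<Longrightarrow> rep i \<in> S \<and> rep i div r = i"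
proof -
  have "\<exists>j. j \<in> S \<and> j div r = i" if "i < g" for i
  proof -
    have "S \<inter> {i * r..<(i + 1) * r} \<noteq> {}" using assms(2) that by fastforce
    then show ?thesis using mem_block_iff_div[OF \<open>r > 0\<close>] by blast
  qed
  then show ?thesis using that by metis
qed

lemma MR_LRC_of_lin_indep_differences:
  fixes \<beta> :: "nat \<Rightarrow> 'a :: field"
  assumes frob: "additive (\<lambda>x :: 'a. x ^ q)" "q > 0"
    and "0 < g" "0 < r" "0 < h" "g + h < g * r"
    and indep: "\<And>S rep. S \<subseteq> {..<g * r} \<Longrightarrow> card S \<le> h \<Longrightarrow>
      (\<And>i. i < g \<Longrightarrow> rep i div r = i \<and> rep i \<notin> S) \<Longrightarrow>
      lin_indep_over (fixed_field q) S (\<lambda>j. \<beta> j - \<beta> (rep (j div r)))"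
  shows "MR_LRC g r h 1 (\<lambda>_ _ _. 1) (\<lambda>t j. \<beta> j ^ (q ^ t))"
  unfolding MR_LRC_def
proof (intro conjI allI impI)
  show "0 < (1 :: nat)" "0 < g" "0 < r" "0 < h" "g * 1 + h < g * r" using assms(3-6) by auto
  show "lin_code ((\<lambda>_ _ _. 1) i) r 1 (r - 1 + 1)" for i
    using lin_code_repetition[OF \<open>0 < r\<close>] \<open>0 < r\<close> by simp
next
  fix S assume S: "S \<subseteq> {0..<g * r} \<and> card S = g * 1 + h \<and> (\<forall>i<g. 1 \<le> card (S \<inter> {i * r..<(i + 1) * r}))"
  obtain rep where rep: "\<And>i. i < g \<Longrightarrow> rep i \<in> S \<and> rep i div r = i"
    using exists_block_representatives[OF \<open>0 < r\<close>] S by blast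
  have "finite S" using S finite_subset by blast
  have "inj_on rep {..<g}" by (rule inj_onI) (metis rep lessThan_iff)
  then have card: "card (S - rep ` {..<g}) \<le> h"
    using S rep \<open>finite S\<close> by (subst card_Diff_subset) (auto simp: card_image)
  have sub: "S \<subseteq> {..<g * r}" using S by auto
  have diff_indep: "lin_indep_over (fixed_field q) (S - rep ` {..<g}) (\<lambda>j. \<beta> j - \<beta> (rep (j div r)))"
    using sub rep card by (intro indep) auto
  have kernel: "\<forall>j\<in>S. c j = 0"
    if "\<And>i. i < g \<Longrightarrow> (\<Sum>j\<in>S. if j div r = i then c j else 0) = 0"
      and "\<And>t. t < h \<Longrightarrow> (\<Sum>j\<in>S. c j * \<beta> j ^ (q ^ t)) = 0" for c
    by (rule repetition_blocks_kernel_trivial[OF frob sub card rep diff_indep that])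
  show "cols_lin_indep (block_pcm g r 1 (\<lambda>_ _ _. 1) (\<lambda>t j. \<beta> j ^ (q ^ t))) (g * 1 + h) S"
    unfolding cols_lin_indep_def
  proof (intro allI impI kernel)
    fix c assume eqs: "\<forall>i<g * 1 + h. (\<Sum>j\<in>S. c j * block_pcm g r 1 (\<lambda>_ _ _. 1) (\<lambda>t j. \<beta> j ^ (q ^ t)) i j) = 0"
    show "(\<Sum>j\<in>S. if j div r = i then c j else 0) = 0" if "i < g" for i
    proof -
      have "(\<Sum>j\<in>S. c j * block_pcm g r 1 (\<lambda>_ _ _. 1) (\<lambda>t j. \<beta> j ^ (q ^ t)) i j)
          = (\<Sum>j\<in>S. if j div r = i then c j else 0)"
        by (intro sum.cong refl) (subst block_pcm_repetition_row[OF that \<open>0 < r\<close>], simp)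
      then show ?thesis using eqs that by simp
    qed
    show "(\<Sum>j\<in>S. c j * \<beta> j ^ (q ^ t)) = 0" if "t < h" for t
      using eqs[rule_format, of "g * 1 + t"] that
      unfolding block_pcm_global_row[of g r 1 _ _ t] by simp
  qed
qed

lemma MR_LRC_construction:
  fixes P :: "nat \<Rightarrow> nat \<Rightarrow> 'a :: field" and \<theta> \<omega> a :: "nat \<Rightarrow> 'a"
  assumes frob: "additive (\<lambda>x :: 'a. x ^ q)" "q > 0"
    and F: "is_subfield F" "fixed_field q \<subseteq> F"
    and P: "\<forall>l t. P l t \<in> fixed_field q" "parity_check_dist_ge (fixed_field q) P r m (h + 2)"
    and \<theta>: "\<forall>t<m. \<theta> t \<in> F" "lin_indep_over (fixed_field q) {..<m} \<theta>"
    and \<omega>: "lin_indep_over F {..<s} \<omega>" "min h g \<le> s"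
    and a: "a ` {..<g} \<subseteq> F" "inj_on a {..<g}"
    and "0 < g" "0 < r" "0 < h" "g + h < g * r"
  shows "MR_LRC g r h 1 (\<lambda>_ _ _. 1)
    (\<lambda>t j. ((\<Sum>\<tau><m. P (j mod r) \<tau> * \<theta> \<tau>) * (\<Sum>u<s. a (j div r) ^ u * \<omega> u)) ^ (q ^ t))"
proof -
  define y where "y l = (\<Sum>\<tau><m. P l \<tau> * \<theta> \<tau>)" for l
  define v where "v i = (\<Sum>u<s. a i ^ u * \<omega> u)" for i
  have K: "is_subfield (fixed_field q :: 'a set)" by (rule is_subfield_fixed_field[OF frob])
  have y: "\<forall>l. y l \<in> F"
    using P(1) \<theta>(1) F unfolding y_def by (auto intro!: subfield_sum[OF F(1)] subfield_mult[OF F(1)])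
  have dist: "parity_check_dist_ge (fixed_field q) (\<lambda>l _. y l) r 1 (h + 2)"
    unfolding y_def by (rule parity_check_dist_ge_combine[OF K P \<theta>(2)])
  have v: "lin_indep_over F I v" if "I \<subseteq> {..<g}" "card I \<le> h" for I
  proof -
    have "card I \<le> g" using card_mono[OF _ that(1)] by simp
    then show ?thesis unfolding v_def
      using that a \<omega> finite_subset[OF that(1)]
      by (intro lin_indep_over_power_combinations[OF F(1)]) (auto intro: inj_on_subset)
  qed
  show ?thesis
  proof (rule MR_LRC_of_lin_indep_differences[OF frob \<open>0 < g\<close> \<open>0 < r\<close> \<open>0 < h\<close> \<open>g + h < g * r\<close>])
    fix S rep assume S: "S \<subseteq> {..<g * r}" "card S \<le> h"
      and rep: "\<And>i. i < g \<Longrightarrow> rep i div r = i \<and> rep i \<notin> S"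
    have S_blocks: "\<forall>j\<in>S. j div r < g" using S(1) by (auto simp: less_mult_imp_div_less mult.commute)
    have "j mod r \<noteq> rep (j div r) mod r" if "j \<in> S" for j
      using rep[of "j div r"] S_blocks that by (metis div_mult_mod_eq)
    then have "lin_indep_over (fixed_field q) S
        (\<lambda>j. (y (j mod r) - y (rep (j div r) mod r)) * v (j div r))"
      using S finite_subset[OF S(1)] S_blocks \<open>0 < r\<close>
      by (intro lin_indep_over_block_differences[OF K F \<open>0 < r\<close> y dist v]) auto
    then show "lin_indep_over (fixed_field q) S (\<lambda>j.
        (\<Sum>\<tau><m. P (j mod r) \<tau> * \<theta> \<tau>) * (\<Sum>u<s. a (j div r) ^ u * \<omega> u) -
        (\<Sum>\<tau><m. P (rep (j div r) mod r) \<tau> * \<theta> \<tau>) * (\<Sum>u<s. a (rep (j div r) div r) ^ u * \<omega> u))"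
      by (rule lin_indep_over_cong) (use rep S_blocks in \<open>simp add: y_def v_def algebra_simps\<close>)
  qed
qed

lemma exists_MR_LRC:
  assumes card_l: "card (UNIV :: 'l :: {finite,field} set) = (q ^ m) ^ s"
    and "s = min h g" and "prime p" and "q = p ^ k" and "k > 0" and "m > 0" and "g \<le> q ^ m"
    and code: "m \<ge> r \<or> (m < r \<and> card (UNIV :: 'q :: {finite,field} set) = q \<and>
      (\<exists>G :: nat \<Rightarrow> nat \<Rightarrow> 'q. lin_code_ge G r (r - m) (h + 2)))"
    and "0 < g" and "0 < r" and "0 < h" and "g + h < g * r"
  shows "\<exists>(A :: nat \<Rightarrow> nat \<Rightarrow> nat \<Rightarrow> 'l) D. MR_LRC g r h 1 A D"
proof -
  define F :: "'l set" where "F = fixed_field (q ^ m)"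
  have "p ^ 1 \<le> p ^ k" using assms(3,5) prime_ge_2_nat[of p] by (intro power_increasing) auto
  then have "q \<ge> 2" using prime_ge_2_nat[OF assms(3)] assms(4) by simp
  have "q ^ 1 \<le> q ^ m" using \<open>q \<ge> 2\<close> \<open>m > 0\<close> by (intro power_increasing) auto
  then have "q ^ m \<ge> 2" using \<open>q \<ge> 2\<close> by simp
  have "s > 0" using assms(2,9,11) by simp
  have card_l': "card (UNIV :: 'l set) = q ^ (m * s)" "m * s > 0"
    using card_l \<open>m > 0\<close> \<open>s > 0\<close> by (simp_all add: power_mult)
  have "CHAR('l) = p"
    using CHAR_finite_field[OF assms(3), of "k * (m * s)"] card_l'(1) assms(4) by (simp add: power_mult)
  then have frob: "additive (\<lambda>x :: 'l. x ^ (q ^ t))" for t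
    by (intro additive_power_CHAR[where e = "k * t"]) (simp add: assms(4) power_mult)
  have K: "is_subfield (fixed_field q :: 'l set)" "card (fixed_field q :: 'l set) = q"
    using is_subfield_fixed_field[OF frob[of 1]] card_fixed_field[OF card_l' \<open>q \<ge> 2\<close>] \<open>q \<ge> 2\<close>
    by simp_all
  have F: "is_subfield F" "fixed_field q \<subseteq> F" "card F = q ^ m"
    using is_subfield_fixed_field[OF frob[of m]] fixed_field_subset_power
      card_fixed_field[OF card_l \<open>s > 0\<close> \<open>q ^ m \<ge> 2\<close>] \<open>q \<ge> 2\<close>
    by (simp_all add: F_def)
  obtain P :: "nat \<Rightarrow> nat \<Rightarrow> 'l" where P: "\<forall>l t. P l t \<in> fixed_field q"
    "parity_check_dist_ge (fixed_field q) P r m (h + 2)"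
    using exists_parity_check_in_fixed_field[OF card_l' assms(3,4) code] by blast
  obtain \<theta> where \<theta>: "\<forall>t<m. \<theta> t \<in> F" "lin_indep_over (fixed_field q) {..<m} \<theta>"
    using exists_lin_indep_over[OF K(1) F(1,2)] K(2) F(3) by auto
  obtain \<omega> where \<omega>: "lin_indep_over F {..<s} \<omega>"
    using exists_lin_indep_over[OF F(1) is_subfield_UNIV] card_l F(3) by auto
  obtain a where a: "a ` {..<g} \<subseteq> F" "inj_on a {..<g}"
    using card_le_inj[of "{..<g}" F] \<open>g \<le> q ^ m\<close> F(3) by auto
  have "additive (\<lambda>x :: 'l. x ^ q)" using frob[of 1] by simp
  from MR_LRC_construction[OF this _ F(1,2) P \<theta> \<omega> _ a] show ?thesis
    using assms(2,9-12) \<open>q \<ge> 2\<close> by auto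
qed

theorem lemma3p8:
  fixes r h g m q n :: nat
  assumes "r \<ge> 2" and "h \<ge> 2" and "g > 0" and "m > 0" and "g + h < g * r"
    and "n = r * g"
    and "\<exists>p k. prime p \<and> k > 0 \<and> q = p ^ k"
    and "real q ^ m \<ge> real (m * n) / real r"
    and "m \<ge> r \<or>
         (m < r \<and> card (UNIV :: 'q::{finite,field} set) = q \<and>
          (\<exists>G :: nat \<Rightarrow> nat \<Rightarrow> 'q. lin_code_ge G r (r - m) (h + 2)))"
    and "card (UNIV :: 'l::{finite,field} set) = q ^ min (h * m) (n * m div r)"
  shows "\<exists>(A :: nat \<Rightarrow> nat \<Rightarrow> nat \<Rightarrow> 'l) D. MR_LRC g r h 1 A D"
proof -
  obtain p k where p: "prime p" "k > 0" "q = p ^ k" using assms(7) by blast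
  have "n * m div r = m * g" using assms(1,6) by simp
  then have "min (h * m) (n * m div r) = m * min h g" by (simp add: min_def mult.commute)
  then have card_l: "card (UNIV :: 'l set) = (q ^ m) ^ min h g"
    using assms(10) by (simp add: power_mult)
  have "real (g * m) \<le> real (q ^ m)" using assms(1,6,8) by (simp add: field_simps)
  then have "g * m \<le> q ^ m" by (simp only: of_nat_le_iff)
  moreover have "g \<le> g * m" using \<open>m > 0\<close> by simp
  ultimately have "g \<le> q ^ m" by linarith
  then show ?thesis
    using exists_MR_LRC[OF card_l refl p(1,3,2) assms(4) _ assms(9)] assms(1-3,5) by auto
qed

end
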